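(* Let $(V,g)$ be a Euclidean vector space of dimension $n\ge3$, $N=\frac{(n-1)(n+2)}{2}$, $\alpha\in[1,N)$, and let $\bar{\Theta}_{n,\alpha}=\alpha^{-1}$ if $1\le\alpha\le n$ and $\bar{\Theta}_{n,\alpha}=\alpha^{-1}+\frac{n(n-\alpha)}{(n-2)\alpha}$ if $n\le\alpha<N$. Let $R$ be an algebraic curvature tensor on $V$ and $\mathring{R}$ its induced curvature operator of the second kind. If $\mathring{R}\in\mathcal{C}(\alpha,\bar{\Theta}_{n,\alpha})$ (respectively, $\mathring{R}\in\mathring{\mathcal{C}}(\alpha,\bar{\Theta}_{n,\alpha})$), then $R$ has nonnegative (respectively, positive) Ricci curvature.
   Context: $S^2_0(V)$ is the space of traceless symmetric two-tensors on $V$, of dimension $N$. An algebraic curvature tensor is $R\in S^2(\wedge^2V)$ satisfying the first Bianchi identity. The curvature operator of the second kind is $\mathring{R}=\pi\circ\overline{R}:S^2_0(V)\to S^2_0(V)$, where $\overline{R}(h)_{ij}=\sum_{k,l}R_{iklj}h_{kl}$ and $\pi$ is the orthogonal projection onto traceless tensors. Let $\lambda_1\le\cdots\le\lambda_N$ be its eigenvalues and $\bar\lambda$ their average; for non-integer $\alpha$, $\lambda_1+\cdots+\lambda_\alpha:=\lambda_1+\cdots+\lambda_{[\alpha]}+(\alpha-[\alpha])\lambda_{[\alpha]+1}$. For $\alpha\in[1,N)$, $\theta>-1$, $\mathcal{C}(\alpha,\theta)$ is the cone of symmetric operators on $S^2_0(V)$ with $\alpha^{-1}(\lambda_1+\cdots+\lambda_\alpha)\ge-\theta\bar\lambda$,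 and $\mathring{\mathcal{C}}(\alpha,\theta)$ is its interior. *)

theory Defs
  imports Complex_Main
begin

text \<open>V is identified with R^n via an orthonormal basis indexed by the finite type 'n,
  so g is the standard inner product; tensors are given by their components.\<close>

type_synonym 'n tensor4 = "'n \<Rightarrow> 'n \<Rightarrow> 'n \<Rightarrow> 'n \<Rightarrow> real"
type_synonym 'n tensor2 = "'n \<Rightarrow> 'n \<Rightarrow> real"

text \<open>Algebraic curvature tensor: element of S^2(wedge^2 V) satisfying the first Bianchi identity.
  Sign convention: R i j i j is the sectional curvature of the plane spanned by e_i, e_j.\<close>
definition alg_curv_tensor :: "('n::finite) tensor4 \<Rightarrow> bool" where
  "alg_curv_tensor R \<longleftrightarrow>
     (\<forall>i j k l. R i j k l = - R j i k l) \<and>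
     (\<forall>i j k l. R i j k l = - R i j l k) \<and>
     (\<forall>i j k l. R i j k l = R k l i j) \<and>
     (\<forall>i j k l. R i j k l + R j k i l + R k i j l = 0)"

definition dimS20 :: "nat \<Rightarrow> nat" where
  "dimS20 n = ((n - 1) * (n + 2)) div 2"

definition trace2 :: "('n::finite) tensor2 \<Rightarrow> real" where
  "trace2 h = (\<Sum>i\<in>UNIV. h i i)"

definition traceless_sym :: "('n::finite) tensor2 \<Rightarrow> bool" where
  "traceless_sym h \<longleftrightarrow> (\<forall>i j. h i j = h j i) \<and> trace2 h = 0"

definition inner2 :: "('n::finite) tensor2 \<Rightarrow> 'n tensor2 \<Rightarrow> real" where
  "inner2 h k = (\<Sum>i\<in>UNIV. \<Sum>j\<in>UNIV. h i j * k i j)"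

definition Rbar :: "('n::finite) tensor4 \<Rightarrow> 'n tensor2 \<Rightarrow> 'n tensor2" where
  "Rbar R h = (\<lambda>i j. \<Sum>k\<in>UNIV. \<Sum>l\<in>UNIV. R i k l j * h k l)"

definition proj0 :: "('n::finite) tensor2 \<Rightarrow> 'n tensor2" where
  "proj0 h = (\<lambda>i j. h i j - (if i = j then trace2 h / real (card (UNIV :: 'n set)) else 0))"

definition curv_op2 :: "('n::finite) tensor4 \<Rightarrow> 'n tensor2 \<Rightarrow> 'n tensor2" where
  "curv_op2 R h = proj0 (Rbar R h)"

definition is_eigenvalue_list :: "('n::finite) tensor4 \<Rightarrow> real list \<Rightarrow> bool" where
  "is_eigenvalue_list R lam \<longleftrightarrow>
     length lam = dimS20 (card (UNIV :: 'n set)) \<and> sorted lam \<and>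
     (\<exists>e :: nat \<Rightarrow> 'n tensor2.
        (\<forall>a < dimS20 (card (UNIV :: 'n set)). traceless_sym (e a)) \<and>
        (\<forall>a < dimS20 (card (UNIV :: 'n set)). \<forall>b < dimS20 (card (UNIV :: 'n set)).
            inner2 (e a) (e b) = (if a = b then 1 else 0)) \<and>
        (\<forall>a < dimS20 (card (UNIV :: 'n set)). curv_op2 R (e a) = (\<lambda>i j. lam ! a * e a i j)))"

definition curv_op2_eigenvalues :: "('n::finite) tensor4 \<Rightarrow> real list" where
  "curv_op2_eigenvalues R = (SOME lam. is_eigenvalue_list R lam)"

text \<open>lambda_1 + ... + lambda_alpha for real alpha (list is 0-indexed).\<close>
definition partial_eig_sum :: "real list \<Rightarrow> real \<Rightarrow> real" where
  "partial_eig_sum lam \<alpha> =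
     (\<Sum>a < nat \<lfloor>\<alpha>\<rfloor>. lam ! a) + (\<alpha> - of_int \<lfloor>\<alpha>\<rfloor>) * lam ! nat \<lfloor>\<alpha>\<rfloor>"

definition eig_average :: "real list \<Rightarrow> real" where
  "eig_average lam = sum_list lam / real (length lam)"

definition in_cone :: "('n::finite) tensor4 \<Rightarrow> real \<Rightarrow> real \<Rightarrow> bool" where
  "in_cone R \<alpha> \<theta> \<longleftrightarrow>
     partial_eig_sum (curv_op2_eigenvalues R) \<alpha> / \<alpha>
       \<ge> - \<theta> * eig_average (curv_op2_eigenvalues R)"

definition in_cone_interior :: "('n::finite) tensor4 \<Rightarrow> real \<Rightarrow> real \<Rightarrow> bool" where
  "in_cone_interior R \<alpha> \<theta> \<longleftrightarrow>
     partial_eig_sum (curv_op2_eigenvalues R) \<alpha> / \<alpha>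
       > - \<theta> * eig_average (curv_op2_eigenvalues R)"

definition Theta_bar :: "nat \<Rightarrow> real \<Rightarrow> real" where
  "Theta_bar n \<alpha> = (if \<alpha> \<le> real n then 1 / \<alpha>
                     else 1 / \<alpha> + real n * (real n - \<alpha>) / ((real n - 2) * \<alpha>))"

definition ricci :: "('n::finite) tensor4 \<Rightarrow> 'n tensor2" where
  "ricci R = (\<lambda>j k. \<Sum>i\<in>UNIV. R i j i k)"

definition ricci_form :: "('n::finite) tensor4 \<Rightarrow> ('n \<Rightarrow> real) \<Rightarrow> real" where
  "ricci_form R v = (\<Sum>j\<in>UNIV. \<Sum>k\<in>UNIV. ricci R j k * v j * v k)"

definition nonneg_ricci :: "('n::finite) tensor4 \<Rightarrow> bool" where
  "nonneg_ricci R \<longleftrightarrow> (\<forall>v. ricci_form R v \<ge> 0)"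

definition pos_ricci :: "('n::finite) tensor4 \<Rightarrow> bool" where
  "pos_ricci R \<longleftrightarrow> (\<forall>v. (\<exists>i. v i \<noteq> 0) \<longrightarrow> ricci_form R v > 0)"

end

theory Submission
  imports Defs "HOL-Analysis.Analysis"
begin

(*
  Fix a unit vector v and an orthonormal eigenbasis e_1, ..., e_N of the curvature operator of
  the second kind, with eigenvalues lambda_1 <= ... <= lambda_N. Test it against the radial
  tensor H = n v (x) v - g and the mixed tensors X_i = v (.) (e_i - v_i v), all traceless: the
  weights x_a = <e_a, H>^2 / (n (n - 1)) and y_a = 2 sum_i <e_a, X_i>^2 satisfy x_a + y_a <= 1,
  sum_a x_a = 1, sum_a y_a = n - 1, sum_a lambda_a x_a = (2 n Ric(v,v) - scal) / (n (n - 1)) and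
  sum_a lambda_a y_a = Ric(v,v), while sum_a lambda_a = (n + 2) scal / (2 n).
  The weights c_a = t + (1 - t) x_a + (w - t) y_a lie in [0,1] for 0 <= t <= w <= 1, and t, w can
  be chosen so that their total mass is alpha; then lambda_1 + ... + lambda_alpha is at most
  sum_a lambda_a c_a. For theta = Theta_bar(n, alpha) the scalar curvature cancels against the
  cone condition, leaving a positive multiple of Ric(v,v) that is >= 0 (> 0 in the interior).
  The eigenbasis exists by the variational characterisation of eigenvalues: each eigenvector
  minimises the quadratic form of R on the unit sphere of the complement of the previous ones.
*)

lemma sum_if_cond_const: "(\<Sum>x\<in>A. if P then f x else 0) = (if P then sum f A else 0)"
  by simp

lemma sum_swap_pairs:
  "(\<Sum>i\<in>A. \<Sum>j\<in>B. \<Sum>k\<in>C. \<Sum>l\<in>D. F i j k l) = (\<Sum>k\<in>C. \<Sum>l\<in>D. \<Sum>i\<in>A. \<Sum>j\<in>B. F i j k l)"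
  by (simp only: sum.swap[where A = B and B = C] sum.swap[where A = A and B = C]
      sum.swap[where A = B and B = D] sum.swap[where A = A and B = D])

lemma sum_rotate3:
  "(\<Sum>a\<in>A. \<Sum>b\<in>B. \<Sum>c\<in>C. F a b c) = (\<Sum>b\<in>B. \<Sum>c\<in>C. \<Sum>a\<in>A. F a b c)"
  by (subst sum.swap) (intro sum.cong refl sum.swap)

section \<open>The Frobenius inner product on 2-tensors\<close>

lemma inner2_commute: "inner2 h k = inner2 k h"
  unfolding inner2_def by (simp add: mult.commute)

lemma inner2_add_left: "inner2 (\<lambda>i j. h i j + g i j) k = inner2 h k + inner2 g k"
  unfolding inner2_def by (simp add: distrib_right sum.distrib)

lemma inner2_diff_left: "inner2 (\<lambda>i j. h i j - g i j) k = inner2 h k - inner2 g k"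
  unfolding inner2_def by (simp add: left_diff_distrib sum_subtractf)

lemma inner2_scale_left: "inner2 (\<lambda>i j. c * h i j) k = c * inner2 h k"
  unfolding inner2_def by (simp add: sum_distrib_left mult.assoc)

lemma inner2_sum_left: "inner2 (\<lambda>i j. \<Sum>a\<in>A. f a i j) k = (\<Sum>a\<in>A. inner2 (f a) k)"
  unfolding inner2_def sum_distrib_right by (simp add: sum.swap[of _ A])

lemma inner2_sum_right: "inner2 k (\<lambda>i j. \<Sum>a\<in>A. f a i j) = (\<Sum>a\<in>A. inner2 k (f a))"
  unfolding inner2_def sum_distrib_left by (simp add: sum.swap[of _ A])

lemma inner2_add_right: "inner2 k (\<lambda>i j. h i j + g i j) = inner2 k h + inner2 k g"
  by (simp add: inner2_commute[of k] inner2_add_left)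

lemma inner2_diff_right: "inner2 k (\<lambda>i j. h i j - g i j) = inner2 k h - inner2 k g"
  by (simp add: inner2_commute[of k] inner2_diff_left)

lemma inner2_scale_right: "inner2 k (\<lambda>i j. c * h i j) = c * inner2 k h"
  by (simp add: inner2_commute[of k] inner2_scale_left)

lemma inner2_axpy_left: "inner2 (\<lambda>i j. a i j + t * b i j) k = inner2 a k + t * inner2 b k"
  by (simp add: inner2_add_left inner2_scale_left)

lemma inner2_axpy_right: "inner2 k (\<lambda>i j. a i j + t * b i j) = inner2 k a + t * inner2 k b"
  by (simp add: inner2_add_right inner2_scale_right)

lemma inner2_axpy_self:
  "inner2 (\<lambda>i j. m i j + t * w i j) (\<lambda>i j. m i j + t * w i j)
     = inner2 m m + 2 * t * inner2 m w + t\<^sup>2 * inner2 w w"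
  unfolding inner2_axpy_left inner2_axpy_right
  by (simp add: inner2_commute[of w m] algebra_simps power2_eq_square)

lemma inner2_self_nonneg: "0 \<le> inner2 h h"
  unfolding inner2_def by (intro sum_nonneg) auto

lemma inner2_self_eq_0_iff: "inner2 h h = 0 \<longleftrightarrow> h = (\<lambda>i j. 0)"
proof
  assume "inner2 h h = 0"
  then have "\<forall>i. (\<Sum>j\<in>UNIV. h i j * h i j) = 0"
    unfolding inner2_def by (subst (asm) sum_nonneg_eq_0_iff) (auto intro: sum_nonneg)
  then show "h = (\<lambda>i j. 0)"
    by (auto simp: sum_nonneg_eq_0_iff intro!: ext)
qed (simp add: inner2_def)

lemma traceless_sym_add:
  "traceless_sym h \<Longrightarrow> traceless_sym g \<Longrightarrow> traceless_sym (\<lambda>i j. h i j + g i j)"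
  unfolding traceless_sym_def trace2_def by (simp add: sum.distrib)

lemma traceless_sym_diff:
  "traceless_sym h \<Longrightarrow> traceless_sym g \<Longrightarrow> traceless_sym (\<lambda>i j. h i j - g i j)"
  unfolding traceless_sym_def trace2_def by (simp add: sum_subtractf)

lemma traceless_sym_scale: "traceless_sym h \<Longrightarrow> traceless_sym (\<lambda>i j. c * h i j)"
  unfolding traceless_sym_def trace2_def by (simp add: sum_distrib_left[symmetric])

lemma traceless_sym_sum:
  "(\<And>a. a \<in> A \<Longrightarrow> traceless_sym (f a)) \<Longrightarrow> traceless_sym (\<lambda>i j. \<Sum>a\<in>A. f a i j)"
  unfolding traceless_sym_def trace2_def by (subst sum.swap) simp

definition normalize2 :: "('n::finite) tensor2 \<Rightarrow> 'n tensor2" where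
  "normalize2 h = (\<lambda>i j. h i j / sqrt (inner2 h h))"

lemma inner2_normalize2_left: "inner2 (normalize2 h) g = inner2 h g / sqrt (inner2 h h)"
  using inner2_scale_left[of "1 / sqrt (inner2 h h)" h g] by (simp add: normalize2_def)

lemma inner2_normalize2:
  assumes "h \<noteq> (\<lambda>i j. 0)"
  shows "inner2 (normalize2 h) (normalize2 h) = 1"
proof -
  have "0 < inner2 h h"
    using assms inner2_self_nonneg[of h] inner2_self_eq_0_iff[of h] by linarith
  then show ?thesis
    by (simp add: inner2_normalize2_left inner2_commute[of h "normalize2 h"] field_simps)
qed

lemma traceless_sym_normalize2: "traceless_sym h \<Longrightarrow> traceless_sym (normalize2 h)"
  using traceless_sym_scale[of h "1 / sqrt (inner2 h h)"] by (simp add: normalize2_def)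

section \<open>Orthonormal families in the space of traceless symmetric tensors\<close>

lemma real_dimS20:
  assumes "1 \<le> n"
  shows "real (dimS20 n) = (real n - 1) * (real n + 2) / 2"
proof -
  have "even ((n - 1) * (n + 2))"
    using assms by (cases "even n") auto
  then have "real (dimS20 n) = real ((n - 1) * (n + 2)) / 2"
    unfolding dimS20_def by (simp add: real_of_nat_div)
  moreover have "real ((n - 1) * (n + 2)) = (real n - 1) * (real n + 2)"
    using assms by (subst of_nat_mult) (simp add: of_nat_diff)
  ultimately show ?thesis
    by simp
qed

lemma trace2_proj0: "trace2 (proj0 (X :: ('n::finite) tensor2)) = 0"
  unfolding proj0_def trace2_def by (simp add: sum_subtractf)

lemma inner2_diag: "inner2 (\<lambda>i j. if i = j then c else 0) e = c * trace2 e"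
  unfolding inner2_def trace2_def
  by (simp add: sum_distrib_left if_distrib[where f = "\<lambda>x. x * _"] sum.delta cong: if_cong)

lemma inner2_proj0: "trace2 e = 0 \<Longrightarrow> inner2 (proj0 X) e = inner2 X e"
  unfolding proj0_def by (simp add: inner2_diff_left inner2_diag)

lemma inner2_transpose: "(\<forall>i j. e i j = e j i) \<Longrightarrow> inner2 (\<lambda>i j. X j i) e = inner2 X e"
  unfolding inner2_def by (subst sum.swap) simp

lemma traceless_sym_proj0: "(\<forall>i j. X i j = X j i) \<Longrightarrow> traceless_sym (proj0 X)"
  unfolding traceless_sym_def using trace2_proj0[of X] by (simp add: proj0_def)

definition unit_tensor :: "'n \<Rightarrow> 'n \<Rightarrow> 'n tensor2" where
  "unit_tensor p q = (\<lambda>i j. if i = p \<and> j = q then 1 else 0)"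

definition sym_traceless_part :: "('n::finite) tensor2 \<Rightarrow> 'n tensor2" where
  "sym_traceless_part X = proj0 (\<lambda>i j. (X i j + X j i) / 2)"

lemma traceless_sym_sym_traceless_part: "traceless_sym (sym_traceless_part X)"
  unfolding sym_traceless_part_def by (rule traceless_sym_proj0) (simp add: add.commute)

lemma inner2_sym_traceless_part:
  assumes "traceless_sym e"
  shows "inner2 (sym_traceless_part X) e = inner2 X e"
proof -
  have "inner2 (\<lambda>i j. (X i j + X j i) / 2) e = (inner2 X e + inner2 (\<lambda>i j. X j i) e) / 2"
    using inner2_add_left[of X "\<lambda>i j. X j i" e] inner2_scale_left[of "1/2" _ e] by simp
  also have "\<dots> = inner2 X e"
    using assms inner2_transpose[of e X] unfolding traceless_sym_def by simp
  finally show ?thesis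
    using assms unfolding traceless_sym_def sym_traceless_part_def by (simp add: inner2_proj0)
qed

lemma inner2_unit_tensor: "inner2 (unit_tensor p q) e = e p q"
proof -
  have "unit_tensor p q i j * e i j = (if j = q then if i = p then e i j else 0 else 0)" for i j
    by (simp add: unit_tensor_def)
  then show ?thesis
    unfolding inner2_def by (simp add: sum.delta)
qed

lemma inner2_sym_traceless_part_unit_tensor:
  "traceless_sym e \<Longrightarrow> inner2 (sym_traceless_part (unit_tensor p q)) e = e p q"
  by (simp add: inner2_sym_traceless_part inner2_unit_tensor)

text \<open>The trace of the orthogonal projection onto S^2_0(V), computed in the basis of unit tensors.\<close>
lemma sum_sym_traceless_part_unit_tensor:
  "(\<Sum>p\<in>(UNIV :: 'n::finite set). \<Sum>q\<in>UNIV. sym_traceless_part (unit_tensor p q) p q)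
     = real (dimS20 CARD('n))"
proof -
  let ?n = "real CARD('n)"
  have diag: "sym_traceless_part (unit_tensor p q) p q = 1/2 + (if q = p then 1/2 - 1/?n else 0)"
    for p q :: 'n
    by (simp add: sym_traceless_part_def proj0_def unit_tensor_def trace2_def)
  have "(\<Sum>p\<in>(UNIV :: 'n set). \<Sum>q\<in>UNIV. sym_traceless_part (unit_tensor p q) p q)
      = ?n * (?n / 2 + (1/2 - 1/?n))"
    by (simp add: diag sum.distrib)
  also have "\<dots> = (?n - 1) * (?n + 2) / 2"
    by (simp add: field_simps)
  finally show ?thesis
    by (simp add: real_dimS20 Suc_le_eq)
qed

definition orthonormal_family :: "(nat \<Rightarrow> ('n::finite) tensor2) \<Rightarrow> nat \<Rightarrow> bool" where
  "orthonormal_family f k \<longleftrightarrow> (\<forall>a<k. traceless_sym (f a)) \<and>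
     (\<forall>a<k. \<forall>b<k. inner2 (f a) (f b) = (if a = b then 1 else 0))"

definition unit_perp :: "(nat \<Rightarrow> ('n::finite) tensor2) \<Rightarrow> nat \<Rightarrow> 'n tensor2 \<Rightarrow> bool" where
  "unit_perp f k h \<longleftrightarrow> traceless_sym h \<and> inner2 h h = 1 \<and> (\<forall>a<k. inner2 h (f a) = 0)"

definition span_proj :: "(nat \<Rightarrow> ('n::finite) tensor2) \<Rightarrow> nat \<Rightarrow> 'n tensor2 \<Rightarrow> 'n tensor2" where
  "span_proj f k h = (\<lambda>i j. \<Sum>a<k. inner2 h (f a) * f a i j)"

lemma unit_perp_normalize2:
  assumes "traceless_sym h" and "h \<noteq> (\<lambda>i j. 0)" and "\<forall>a<k. inner2 h (f a) = 0"
  shows "unit_perp f k (normalize2 h)"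
  unfolding unit_perp_def using assms
  by (intro conjI traceless_sym_normalize2 inner2_normalize2 allI impI)
    (simp_all add: inner2_normalize2_left)

lemma orthonormal_family_extend:
  assumes "orthonormal_family f k" and "unit_perp f k h"
  shows "orthonormal_family (f(k := h)) (Suc k)"
  using assms unfolding orthonormal_family_def unit_perp_def
  by (auto simp: less_Suc_eq inner2_commute[of "f _" h])

lemma inner2_span_proj:
  assumes "orthonormal_family f k" and "b < k"
  shows "inner2 (span_proj f k h) (f b) = inner2 h (f b)"
proof -
  have "inner2 (span_proj f k h) (f b) = (\<Sum>a<k. inner2 h (f a) * inner2 (f a) (f b))"
    by (simp add: span_proj_def inner2_sum_left inner2_scale_left)
  also have "\<dots> = (\<Sum>a<k. if a = b then inner2 h (f a) else 0)"
    using assms unfolding orthonormal_family_def by (intro sum.cong) auto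
  finally show ?thesis
    using assms(2) by simp
qed

lemma traceless_sym_span_proj:
  "orthonormal_family f k \<Longrightarrow> traceless_sym (span_proj f k h)"
  unfolding span_proj_def orthonormal_family_def
  by (auto intro!: traceless_sym_sum traceless_sym_scale)

lemma inner2_span_proj_self:
  assumes "orthonormal_family f k"
  shows "inner2 (span_proj f k h) (span_proj f k h) = (\<Sum>a<k. (inner2 h (f a))\<^sup>2)"
    and "inner2 h (span_proj f k h) = (\<Sum>a<k. (inner2 h (f a))\<^sup>2)"
proof -
  have "inner2 g (span_proj f k h) = (\<Sum>a<k. inner2 h (f a) * inner2 g (f a))" for g
    by (simp add: span_proj_def inner2_sum_right inner2_scale_right)
  then show "inner2 (span_proj f k h) (span_proj f k h) = (\<Sum>a<k. (inner2 h (f a))\<^sup>2)"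
    and "inner2 h (span_proj f k h) = (\<Sum>a<k. (inner2 h (f a))\<^sup>2)"
    using inner2_span_proj[OF assms] by (simp_all add: power2_eq_square)
qed

lemma bessel_inequality:
  assumes "orthonormal_family f k"
  shows "(\<Sum>a<k. (inner2 h (f a))\<^sup>2) \<le> inner2 h h"
proof -
  have "0 \<le> inner2 (\<lambda>i j. h i j - span_proj f k h i j) (\<lambda>i j. h i j - span_proj f k h i j)"
    by (rule inner2_self_nonneg)
  also have "\<dots> = inner2 h h - (\<Sum>a<k. (inner2 h (f a))\<^sup>2)"
    using inner2_span_proj_self[OF assms, of h] inner2_commute[of h "span_proj f k h"]
    by (simp add: inner2_diff_left inner2_diff_right)
  finally show ?thesis
    by simp
qed

lemma span_proj_eq_if_no_unit_perp:
  assumes "orthonormal_family f k" and "traceless_sym h" and "\<nexists>u. unit_perp f k u"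
  shows "span_proj f k h = h"
proof -
  define r where "r = (\<lambda>i j. h i j - span_proj f k h i j)"
  have "r = (\<lambda>i j. 0)"
  proof (rule ccontr)
    assume "r \<noteq> (\<lambda>i j. 0)"
    moreover have "traceless_sym r"
      unfolding r_def using assms(1,2) by (intro traceless_sym_diff traceless_sym_span_proj)
    moreover have "\<forall>b<k. inner2 r (f b) = 0"
      unfolding r_def using assms(1) by (simp add: inner2_diff_left inner2_span_proj)
    ultimately have "unit_perp f k (normalize2 r)"
      by (blast intro: unit_perp_normalize2)
    then show False
      using assms(3) by blast
  qed
  then show ?thesis
    unfolding r_def by (auto simp: fun_eq_iff)
qed

lemma sum_sq_orthonormal_family:
  assumes "orthonormal_family f k"
  shows "(\<Sum>p\<in>UNIV. \<Sum>q\<in>UNIV. \<Sum>a<k. (f a p q)\<^sup>2) = real k"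
proof -
  have "(\<Sum>p\<in>UNIV. \<Sum>q\<in>UNIV. \<Sum>a<k. (f a p q)\<^sup>2) = (\<Sum>a<k. inner2 (f a) (f a))"
    unfolding inner2_def power2_eq_square by (simp add: sum.swap[of _ "{..<k}"])
  then show ?thesis
    using assms unfolding orthonormal_family_def by simp
qed

lemma orthonormal_family_le_dim:
  fixes f :: "nat \<Rightarrow> ('n::finite) tensor2"
  assumes "orthonormal_family f k"
  shows "k \<le> dimS20 CARD('n)"
proof -
  let ?P = "\<lambda>p q. sym_traceless_part (unit_tensor p q)"
  have "f a p q = inner2 (?P p q) (f a)" if "a < k" for a p q
    using assms that unfolding orthonormal_family_def
    by (simp add: inner2_sym_traceless_part_unit_tensor)
  then have "real k = (\<Sum>p\<in>(UNIV :: 'n set). \<Sum>q\<in>UNIV. \<Sum>a<k. (inner2 (?P p q) (f a))\<^sup>2)"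
    using sum_sq_orthonormal_family[OF assms] by simp
  also have "\<dots> \<le> (\<Sum>p\<in>(UNIV :: 'n set). \<Sum>q\<in>UNIV. inner2 (?P p q) (?P p q))"
    by (intro sum_mono bessel_inequality assms)
  also have "\<dots> = real (dimS20 CARD('n))"
    by (simp add: inner2_sym_traceless_part_unit_tensor traceless_sym_sym_traceless_part
        sum_sym_traceless_part_unit_tensor)
  finally show ?thesis
    by simp
qed

lemma exists_unit_perp:
  fixes f :: "nat \<Rightarrow> ('n::finite) tensor2"
  assumes "orthonormal_family f k" and "k < dimS20 CARD('n)"
  shows "\<exists>u. unit_perp f k u"
proof (rule ccontr)
  assume none: "\<nexists>u. unit_perp f k u"
  let ?P = "\<lambda>p q. sym_traceless_part (unit_tensor p q)"
  have "?P p q p q = (\<Sum>a<k. (f a p q)\<^sup>2)" for p q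
  proof -
    have "?P p q p q = span_proj f k (?P p q) p q"
      using span_proj_eq_if_no_unit_perp[OF assms(1) traceless_sym_sym_traceless_part none]
      by simp
    then show ?thesis
      using assms(1) unfolding span_proj_def orthonormal_family_def
      by (simp add: inner2_sym_traceless_part_unit_tensor power2_eq_square)
  qed
  then have "real (dimS20 CARD('n)) = real k"
    using sum_sym_traceless_part_unit_tensor[where 'n = 'n] sum_sq_orthonormal_family[OF assms(1)]
    by simp
  then show False
    using assms(2) by simp
qed

lemma span_proj_complete:
  fixes f :: "nat \<Rightarrow> ('n::finite) tensor2"
  assumes "orthonormal_family f (dimS20 CARD('n))" and "traceless_sym h"
  shows "span_proj f (dimS20 CARD('n)) h = h"
proof (rule span_proj_eq_if_no_unit_perp[OF assms])
  show "\<nexists>u. unit_perp f (dimS20 CARD('n)) u"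
    using orthonormal_family_le_dim[OF orthonormal_family_extend[OF assms(1)]] by fastforce
qed

lemma parseval:
  fixes f :: "nat \<Rightarrow> ('n::finite) tensor2"
  assumes "orthonormal_family f (dimS20 CARD('n))" and "traceless_sym h"
  shows "inner2 h g = (\<Sum>a<dimS20 CARD('n). inner2 h (f a) * inner2 (f a) g)"
  using arg_cong[OF span_proj_complete[OF assms], of "\<lambda>h. inner2 h g"]
  by (simp add: span_proj_def inner2_sum_left inner2_scale_left)

lemma resolution_of_identity:
  fixes f :: "nat \<Rightarrow> ('n::finite) tensor2"
  assumes "orthonormal_family f (dimS20 CARD('n))"
  shows "(\<Sum>a<dimS20 CARD('n). f a p q * f a i j) = sym_traceless_part (unit_tensor p q) i j"
proof -
  let ?P = "sym_traceless_part (unit_tensor p q)"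
  have "span_proj f (dimS20 CARD('n)) ?P i j = ?P i j"
    by (simp add: span_proj_complete[OF assms traceless_sym_sym_traceless_part])
  then show ?thesis
    using assms unfolding span_proj_def orthonormal_family_def
    by (simp add: inner2_sym_traceless_part_unit_tensor)
qed

section \<open>Symmetries of the curvature operator of the second kind\<close>

lemma alg_curv_tensorD:
  assumes "alg_curv_tensor R"
  shows "R i j k l = - R j i k l" and "R i j k l = - R i j l k" and "R i j k l = R k l i j"
  using assms unfolding alg_curv_tensor_def by blast+

lemma Rbar_sym:
  assumes "alg_curv_tensor R" and "\<forall>i j. h i j = h j i"
  shows "Rbar R h j i = Rbar R h i j"
proof -
  have "R j k l i = R i l k j" for k l
    using alg_curv_tensorD[OF assms(1)] by metis
  then have "Rbar R h j i = (\<Sum>k\<in>UNIV. \<Sum>l\<in>UNIV. R i l k j * h l k)"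
    unfolding Rbar_def using assms(2) by simp
  also have "\<dots> = Rbar R h i j"
    unfolding Rbar_def by (rule sum.swap)
  finally show ?thesis .
qed

lemma Rbar_self_adjoint:
  assumes "alg_curv_tensor R"
  shows "inner2 (Rbar R h) g = inner2 h (Rbar R g)"
proof -
  have R: "R k i j l = R i k l j" for i j k l
    using alg_curv_tensorD[OF assms] by metis
  have "inner2 (Rbar R h) g = (\<Sum>i\<in>UNIV. \<Sum>j\<in>UNIV. \<Sum>k\<in>UNIV. \<Sum>l\<in>UNIV. R i k l j * h k l * g i j)"
    unfolding inner2_def Rbar_def by (simp add: sum_distrib_right)
  also have "\<dots> = (\<Sum>k\<in>UNIV. \<Sum>l\<in>UNIV. \<Sum>i\<in>UNIV. \<Sum>j\<in>UNIV. R i k l j * h k l * g i j)"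
    by (rule sum_swap_pairs)
  also have "\<dots> = inner2 h (Rbar R g)"
    unfolding inner2_def Rbar_def by (simp add: sum_distrib_left R mult_ac)
  finally show ?thesis .
qed

lemma traceless_sym_curv_op2:
  assumes "alg_curv_tensor R" and "traceless_sym h"
  shows "traceless_sym (curv_op2 R h)"
  unfolding curv_op2_def
  by (rule traceless_sym_proj0) (use assms Rbar_sym in \<open>auto simp: traceless_sym_def\<close>)

lemma inner2_curv_op2:
  "traceless_sym e \<Longrightarrow> inner2 (curv_op2 R h) e = inner2 (Rbar R h) e"
  unfolding curv_op2_def traceless_sym_def by (simp add: inner2_proj0)

definition curv_quad :: "('n::finite) tensor4 \<Rightarrow> 'n tensor2 \<Rightarrow> real" where
  "curv_quad R h = inner2 (Rbar R h) h"

lemma curv_quad_expand: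
  "curv_quad R X = (\<Sum>i\<in>UNIV. \<Sum>k\<in>UNIV. \<Sum>l\<in>UNIV. \<Sum>j\<in>UNIV. R i k l j * X k l * X i j)"
  unfolding curv_quad_def inner2_def Rbar_def sum_distrib_right
  by (intro sum.cong refl sum_rotate3)

lemma curv_quad_eq_inner2_curv_op2:
  "traceless_sym h \<Longrightarrow> curv_quad R h = inner2 (curv_op2 R h) h"
  by (simp add: curv_quad_def inner2_curv_op2)

lemma Rbar_axpy: "Rbar R (\<lambda>i j. a i j + t * b i j) = (\<lambda>i j. Rbar R a i j + t * Rbar R b i j)"
  unfolding Rbar_def by (simp add: distrib_left sum.distrib sum_distrib_left mult_ac)

lemma Rbar_scale: "Rbar R (\<lambda>i j. s * m i j) = (\<lambda>i j. s * Rbar R m i j)"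
  unfolding Rbar_def by (simp add: sum_distrib_left mult_ac)

lemma curv_quad_axpy:
  assumes "alg_curv_tensor R"
  shows "curv_quad R (\<lambda>i j. m i j + t * w i j)
    = curv_quad R m + 2 * t * inner2 (Rbar R m) w + t\<^sup>2 * curv_quad R w"
proof -
  have "inner2 (Rbar R w) m = inner2 (Rbar R m) w"
    using Rbar_self_adjoint[OF assms, of w m] inner2_commute by metis
  then show ?thesis
    unfolding curv_quad_def Rbar_axpy inner2_axpy_left inner2_axpy_right
    by (simp add: algebra_simps power2_eq_square)
qed

lemma curv_quad_scale: "curv_quad R (\<lambda>i j. c * h i j) = c\<^sup>2 * curv_quad R h"
  by (simp add: curv_quad_def Rbar_scale inner2_scale_left inner2_scale_right power2_eq_square)

section \<open>An orthonormal eigenbasis by successive minimisation\<close>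

text \<open>Tensors are transported to the Euclidean space real^('n \<times> 'n), where unit spheres are
  compact.\<close>
definition tensor_of_vec :: "real^('n::finite \<times> 'n) \<Rightarrow> 'n tensor2" where
  "tensor_of_vec x = (\<lambda>i j. x $ (i, j))"

lemma tensor_of_vec_inverse: "tensor_of_vec (\<chi> p. h (fst p) (snd p)) = h"
  by (simp add: tensor_of_vec_def)

lemma inner2_tensor_of_vec: "inner2 (tensor_of_vec x) (tensor_of_vec y) = inner x y"
  by (simp add: inner2_def tensor_of_vec_def inner_vec_def sum.cartesian_product case_prod_beta')

lemma curv_quad_attains_min:
  fixes f :: "nat \<Rightarrow> ('n::finite) tensor2"
  assumes "\<exists>u. unit_perp f k u"
  shows "\<exists>m. unit_perp f k m \<and> (\<forall>h. unit_perp f k h \<longrightarrow> curv_quad R m \<le> curv_quad R h)"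
proof -
  define K where "K = {x. unit_perp f k (tensor_of_vec x)}"
  have "K = sphere 0 1 \<inter> {x. \<forall>i j. x $ (i, j) = x $ (j, i)} \<inter> {x. (\<Sum>i\<in>UNIV. x $ (i, i)) = 0}
      \<inter> {x. \<forall>a. a < k \<longrightarrow> inner2 (tensor_of_vec x) (f a) = 0}"
    unfolding K_def unit_perp_def traceless_sym_def trace2_def inner2_tensor_of_vec
    by (auto simp: norm_eq_sqrt_inner tensor_of_vec_def)
  moreover have "closed {x. \<forall>a. a < k \<longrightarrow> inner2 (tensor_of_vec x) (f a) = 0}"
    unfolding inner2_def tensor_of_vec_def
    by (intro closed_Collect_all closed_Collect_imp closed_Collect_eq continuous_intros) simp
  ultimately have "compact K"
    by (auto intro!: compact_Int_closed closed_Collect_all closed_Collect_eq continuous_intros)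
  moreover obtain u where "unit_perp f k u"
    using assms by blast
  then have "(\<chi> p. u (fst p) (snd p)) \<in> K"
    unfolding K_def by (simp add: tensor_of_vec_inverse)
  moreover have "continuous_on K (\<lambda>x. curv_quad R (tensor_of_vec x))"
    unfolding curv_quad_def inner2_def Rbar_def tensor_of_vec_def by (intro continuous_intros)
  ultimately obtain x where "x \<in> K" and "\<forall>y\<in>K. curv_quad R (tensor_of_vec x) \<le> curv_quad R (tensor_of_vec y)"
    using continuous_attains_inf[of K] by blast
  then show ?thesis
    unfolding K_def by (metis mem_Collect_eq tensor_of_vec_inverse)
qed

lemma nonneg_quadratic_imp_linear_coeff_0:
  fixes a b :: real
  assumes "\<forall>t. 0 \<le> a * t + b * t\<^sup>2"
  shows "a = 0"
proof (rule ccontr)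
  assume "a \<noteq> 0"
  define c where "c = \<bar>b\<bar> + 1"
  define t where "t = - a / (2 * c)"
  have "c > 0" and "b \<le> c"
    unfolding c_def by auto
  have "0 \<le> a * t + b * t\<^sup>2"
    using assms by blast
  also have "\<dots> \<le> a * t + c * t\<^sup>2"
    using \<open>b \<le> c\<close> by (simp add: mult_right_mono)
  also have "\<dots> = - a\<^sup>2 / (4 * c)"
    unfolding t_def using \<open>c > 0\<close> by (simp add: field_simps power2_eq_square)
  also have "\<dots> < 0"
    using \<open>a \<noteq> 0\<close> \<open>c > 0\<close> by (simp add: field_simps)
  finally show False
    by simp
qed

lemma curv_quad_normalize2: "curv_quad R (normalize2 h) = curv_quad R h / inner2 h h"
proof -
  have "normalize2 h = (\<lambda>i j. (1 / sqrt (inner2 h h)) * h i j)"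
    by (simp add: normalize2_def)
  then have "curv_quad R (normalize2 h) = (1 / sqrt (inner2 h h))\<^sup>2 * curv_quad R h"
    by (simp only: curv_quad_scale)
  then show ?thesis
    using inner2_self_nonneg[of h] by (simp add: power_divide)
qed

lemma curv_quad_ge_rayleigh:
  assumes min: "\<forall>h. unit_perp f k h \<longrightarrow> \<mu> \<le> curv_quad R h"
    and "traceless_sym h" and "\<forall>a<k. inner2 h (f a) = 0"
  shows "\<mu> * inner2 h h \<le> curv_quad R h"
proof (cases "h = (\<lambda>i j. 0)")
  case True
  then show ?thesis
    by (simp add: curv_quad_def inner2_def)
next
  case False
  then have "unit_perp f k (normalize2 h)"
    using assms(2,3) by (simp add: unit_perp_normalize2)
  then have "\<mu> \<le> curv_quad R h / inner2 h h"
    using min curv_quad_normalize2 by metis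
  moreover have "0 < inner2 h h"
    using False inner2_self_nonneg[of h] inner2_self_eq_0_iff[of h] by linarith
  ultimately show ?thesis
    by (simp add: field_simps)
qed

lemma minimizer_first_variation:
  assumes acs: "alg_curv_tensor R" and m: "unit_perp e k m"
    and min: "\<forall>h. unit_perp e k h \<longrightarrow> curv_quad R m \<le> curv_quad R h"
    and w: "traceless_sym w" "\<forall>a<k. inner2 w (e a) = 0"
  shows "inner2 (Rbar R m) w = curv_quad R m * inner2 m w"
proof -
  let ?\<mu> = "curv_quad R m"
  have "0 \<le> (2 * (inner2 (Rbar R m) w - ?\<mu> * inner2 m w)) * t + (curv_quad R w - ?\<mu> * inner2 w w) * t\<^sup>2"
    for t
  proof -
    have "?\<mu> * inner2 (\<lambda>i j. m i j + t * w i j) (\<lambda>i j. m i j + t * w i j)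
        \<le> curv_quad R (\<lambda>i j. m i j + t * w i j)"
      using m w unfolding unit_perp_def
      by (intro curv_quad_ge_rayleigh[OF min] traceless_sym_add traceless_sym_scale)
        (simp_all add: inner2_axpy_left)
    then show ?thesis
      using m unfolding inner2_axpy_self curv_quad_axpy[OF acs] unit_perp_def
      by (simp add: algebra_simps)
  qed
  then show ?thesis
    using nonneg_quadratic_imp_linear_coeff_0 by force
qed

lemma inner2_curv_op2_eigenvector:
  assumes "alg_curv_tensor R" and "traceless_sym h" and "traceless_sym f"
    and "curv_op2 R f = (\<lambda>i j. c * f i j)"
  shows "inner2 (curv_op2 R h) f = c * inner2 h f"
proof -
  have "inner2 (curv_op2 R h) f = inner2 h (Rbar R f)"
    using assms(3) by (simp add: inner2_curv_op2 Rbar_self_adjoint[OF assms(1)])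
  also have "\<dots> = inner2 (curv_op2 R f) h"
    using assms(2) by (simp add: inner2_commute[of h] inner2_curv_op2)
  finally show ?thesis
    using assms(4) by (simp add: inner2_scale_left inner2_commute[of f h])
qed

lemma minimizer_is_eigenvector:
  assumes acs: "alg_curv_tensor R" and on: "orthonormal_family e k"
    and eig: "\<forall>a<k. curv_op2 R (e a) = (\<lambda>i j. lam a * e a i j)"
    and m: "unit_perp e k m"
    and min: "\<forall>h. unit_perp e k h \<longrightarrow> curv_quad R m \<le> curv_quad R h"
  shows "curv_op2 R m = (\<lambda>i j. curv_quad R m * m i j)"
proof -
  define w where "w = (\<lambda>i j. curv_op2 R m i j - curv_quad R m * m i j)"
  have "traceless_sym w"
    using m unfolding w_def unit_perp_def
    by (intro traceless_sym_diff traceless_sym_scale traceless_sym_curv_op2[OF acs]) auto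
  moreover have "inner2 w (e a) = 0" if "a < k" for a
    using on m eig that unfolding w_def unit_perp_def orthonormal_family_def
    by (simp add: inner2_diff_left inner2_scale_left inner2_curv_op2_eigenvector[OF acs])
  ultimately have "inner2 (Rbar R m) w = curv_quad R m * inner2 m w"
    by (intro minimizer_first_variation[OF acs m min]) auto
  then have "inner2 w w = 0"
    using \<open>traceless_sym w\<close>
    unfolding w_def by (simp add: inner2_diff_left inner2_scale_left inner2_curv_op2)
  then show ?thesis
    unfolding w_def inner2_self_eq_0_iff by (auto simp: fun_eq_iff)
qed

lemma unit_perp_fun_upd: "a \<le> k \<Longrightarrow> unit_perp (e(k := m)) a h = unit_perp e a h"
  by (simp add: unit_perp_def)

lemma curv_op2_variational_eigenvectors:
  fixes R :: "('n::finite) tensor4"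
  assumes acs: "alg_curv_tensor R"
  shows "k \<le> dimS20 CARD('n) \<Longrightarrow>
    \<exists>e lam. orthonormal_family e k \<and> (\<forall>a<k. curv_op2 R (e a) = (\<lambda>i j. lam a * e a i j)) \<and>
      (\<forall>a<k. \<forall>h. unit_perp e a h \<longrightarrow> lam a \<le> curv_quad R h)"
proof (induction k)
  case 0
  show ?case
    by (simp add: orthonormal_family_def)
next
  case (Suc k)
  then obtain e lam where on: "orthonormal_family e k"
    and eig: "\<forall>a<k. curv_op2 R (e a) = (\<lambda>i j. lam a * e a i j)"
    and min: "\<forall>a<k. \<forall>h. unit_perp e a h \<longrightarrow> lam a \<le> curv_quad R h"
    by auto
  obtain m where m: "unit_perp e k m"
    and m_min: "\<forall>h. unit_perp e k h \<longrightarrow> curv_quad R m \<le> curv_quad R h"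
    using curv_quad_attains_min exists_unit_perp[OF on] Suc.prems by fastforce
  have "orthonormal_family (e(k := m)) (Suc k)"
    by (rule orthonormal_family_extend[OF on m])
  moreover have "\<forall>a<Suc k. curv_op2 R ((e(k := m)) a) = (\<lambda>i j. (lam(k := curv_quad R m)) a * (e(k := m)) a i j)"
    using eig minimizer_is_eigenvector[OF acs on eig m m_min] by (simp add: less_Suc_eq)
  moreover have "\<forall>a<Suc k. \<forall>h. unit_perp (e(k := m)) a h \<longrightarrow> (lam(k := curv_quad R m)) a \<le> curv_quad R h"
    using min m_min by (simp add: less_Suc_eq unit_perp_fun_upd)
  ultimately show ?case
    by blast
qed

lemma curv_quad_unit_eigenvector:
  assumes "traceless_sym h" and "inner2 h h = 1" and "curv_op2 R h = (\<lambda>i j. c * h i j)"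
  shows "curv_quad R h = c"
  using assms by (simp add: curv_quad_eq_inner2_curv_op2 inner2_scale_left)

lemma is_eigenvalue_list_curv_op2_eigenvalues:
  fixes R :: "('n::finite) tensor4"
  assumes acs: "alg_curv_tensor R"
  shows "is_eigenvalue_list R (curv_op2_eigenvalues R)"
proof -
  let ?N = "dimS20 CARD('n)"
  obtain e lam where on: "orthonormal_family e ?N"
    and eig: "\<forall>a<?N. curv_op2 R (e a) = (\<lambda>i j. lam a * e a i j)"
    and min: "\<forall>a<?N. \<forall>h. unit_perp e a h \<longrightarrow> lam a \<le> curv_quad R h"
    using curv_op2_variational_eigenvectors[OF acs, of ?N] by auto
  have "lam a \<le> lam b" if "a \<le> b" and "b < ?N" for a b
  proof -
    have "unit_perp e a (e b)"
      using on that unfolding orthonormal_family_def unit_perp_def by auto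
    then have "lam a \<le> curv_quad R (e b)"
      using min that by simp
    also have "\<dots> = lam b"
      using on eig that unfolding orthonormal_family_def by (simp add: curv_quad_unit_eigenvector)
    finally show ?thesis .
  qed
  then have "is_eigenvalue_list R (map lam [0..<?N])"
    using on eig unfolding is_eigenvalue_list_def orthonormal_family_def
    by (auto simp: sorted_iff_nth_mono)
  then show ?thesis
    unfolding curv_op2_eigenvalues_def by (rule someI)
qed

section \<open>The trace of the curvature operator\<close>

definition scal :: "('n::finite) tensor4 \<Rightarrow> real" where
  "scal R = trace2 (ricci R)"

lemma inner2_proj0_right:
  "inner2 X (proj0 Y) = inner2 X Y - trace2 X * trace2 Y / real CARD('n::finite)"
  for X Y :: "('n::finite) tensor2"
  using inner2_diag[of "trace2 Y / real CARD('n)" X]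
  unfolding proj0_def inner2_diff_right
  by (simp add: inner2_commute[of X "\<lambda>i j. if i = j then _ else 0"])

lemma inner2_sym_traceless_part_unit_tensor_right:
  "inner2 X (sym_traceless_part (unit_tensor p q))
     = (X p q + X q p) / 2 - (if p = q then trace2 X / real CARD('n::finite) else 0)"
  for X :: "('n::finite) tensor2"
proof -
  define Y where "Y = (\<lambda>i j. (unit_tensor p q i j + unit_tensor q p i j) / 2)"
  have "sym_traceless_part (unit_tensor p q) = proj0 Y"
    unfolding sym_traceless_part_def Y_def unit_tensor_def by (simp add: conj_commute)
  moreover have "inner2 X Y = (X p q + X q p) / 2"
    using inner2_add_left[of "unit_tensor p q" "unit_tensor q p" X]
      inner2_scale_left[of "1/2" _ X] inner2_commute[of X Y]
    unfolding Y_def by (simp add: inner2_unit_tensor)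
  moreover have "trace2 Y = (if p = q then 1 else 0)"
    unfolding Y_def trace2_def unit_tensor_def by (auto intro: sum.neutral)
  ultimately show ?thesis
    by (cases "p = q") (simp_all add: inner2_proj0_right)
qed

lemma curv_quad_as_sum:
  "curv_quad R h = (\<Sum>k\<in>UNIV. \<Sum>l\<in>UNIV. h k l * inner2 (\<lambda>i j. R i k l j) h)"
proof -
  have "curv_quad R h = (\<Sum>i\<in>UNIV. \<Sum>j\<in>UNIV. \<Sum>k\<in>UNIV. \<Sum>l\<in>UNIV. R i k l j * h k l * h i j)"
    unfolding curv_quad_def inner2_def Rbar_def by (simp add: sum_distrib_right)
  also have "\<dots> = (\<Sum>k\<in>UNIV. \<Sum>l\<in>UNIV. \<Sum>i\<in>UNIV. \<Sum>j\<in>UNIV. R i k l j * h k l * h i j)"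
    by (rule sum_swap_pairs)
  finally show ?thesis
    unfolding inner2_def by (simp add: sum_distrib_left mult_ac)
qed

lemma sum_curv_quad_orthonormal_basis:
  fixes R :: "('n::finite) tensor4" and e :: "nat \<Rightarrow> 'n tensor2"
  assumes acs: "alg_curv_tensor R" and on: "orthonormal_family e (dimS20 CARD('n))"
  shows "(\<Sum>a<dimS20 CARD('n). curv_quad R (e a)) = (1/2 + 1 / real CARD('n)) * scal R"
proof -
  let ?N = "dimS20 CARD('n)" and ?n = "real CARD('n)"
  let ?X = "\<lambda>k l i j. R i k l j" and ?P = "\<lambda>k l. sym_traceless_part (unit_tensor k l)"
  have "(\<Sum>a<?N. curv_quad R (e a)) = (\<Sum>k\<in>UNIV. \<Sum>l\<in>UNIV. \<Sum>a<?N. e a k l * inner2 (?X k l) (e a))"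
    unfolding curv_quad_as_sum by (subst sum.swap, rule sum.cong[OF refl], rule sum.swap)
  also have "\<dots> = (\<Sum>k\<in>UNIV. \<Sum>l\<in>UNIV. inner2 (?X k l) (\<lambda>i j. \<Sum>a<?N. e a k l * e a i j))"
    by (simp add: inner2_sum_right inner2_scale_right)
  also have "\<dots> = (\<Sum>k\<in>UNIV. \<Sum>l\<in>UNIV. inner2 (?X k l) (?P k l))"
    by (simp add: resolution_of_identity[OF on])
  also have "\<dots> = (\<Sum>k\<in>UNIV. \<Sum>l\<in>UNIV. R l k l k / 2 - (if k = l then (\<Sum>i\<in>UNIV. R i k k i) / ?n else 0))"
    using alg_curv_tensorD(1)[OF acs, of k k l l for k l]
    by (intro sum.cong refl) (simp add: inner2_sym_traceless_part_unit_tensor_right trace2_def)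
  also have "\<dots> = scal R / 2 - (\<Sum>k\<in>UNIV. \<Sum>i\<in>UNIV. R i k k i) / ?n"
    by (simp add: sum_subtractf sum.distrib sum_divide_distrib scal_def trace2_def ricci_def)
  also have "(\<Sum>k\<in>UNIV. \<Sum>i\<in>UNIV. R i k k i) = - scal R"
    using alg_curv_tensorD(2)[OF acs, of i k k i for i k]
    by (simp add: scal_def trace2_def ricci_def sum_negf)
  finally show ?thesis
    by (simp add: algebra_simps)
qed

section \<open>Test tensors\<close>

definition dot :: "('n::finite \<Rightarrow> real) \<Rightarrow> ('n \<Rightarrow> real) \<Rightarrow> real" where
  "dot x y = (\<Sum>i\<in>UNIV. x i * y i)"

definition tensor_form :: "('n::finite) tensor2 \<Rightarrow> ('n \<Rightarrow> real) \<Rightarrow> ('n \<Rightarrow> real) \<Rightarrow> real" where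
  "tensor_form h a b = (\<Sum>i\<in>UNIV. \<Sum>j\<in>UNIV. h i j * a i * b j)"

definition sym_prod :: "('n::finite \<Rightarrow> real) \<Rightarrow> ('n \<Rightarrow> real) \<Rightarrow> 'n tensor2" where
  "sym_prod a b = (\<lambda>i j. (a i * b j + b i * a j) / 2)"

definition curv_form :: "('n::finite) tensor4 \<Rightarrow> ('n \<Rightarrow> real) \<Rightarrow> ('n \<Rightarrow> real) \<Rightarrow> ('n \<Rightarrow> real) \<Rightarrow> ('n \<Rightarrow> real) \<Rightarrow> real" where
  "curv_form R a b c d = (\<Sum>i\<in>UNIV. \<Sum>j\<in>UNIV. \<Sum>k\<in>UNIV. \<Sum>l\<in>UNIV. R i j k l * a i * b j * c k * d l)"

lemma dot_commute: "dot x y = dot y x"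
  unfolding dot_def by (simp add: mult.commute)

lemma dot_scale: "dot (\<lambda>i. c * v i) (\<lambda>i. c * v i) = c\<^sup>2 * dot v v"
  unfolding dot_def by (simp add: sum_distrib_left power2_eq_square mult_ac)

lemma dot_self_pos:
  assumes "v i \<noteq> 0"
  shows "0 < dot v v"
  unfolding dot_def using assms by (intro sum_pos2[of UNIV i]) (auto simp: zero_less_mult_iff)

lemma tensor_form_commute: "\<forall>i j. h i j = h j i \<Longrightarrow> tensor_form h a b = tensor_form h b a"
  unfolding tensor_form_def by (subst sum.swap) (simp add: mult_ac)

lemma inner2_sym_prod:
  assumes "\<forall>i j. h i j = h j i"
  shows "inner2 h (sym_prod a b) = tensor_form h a b"
proof -
  have "inner2 h (sym_prod a b)
      = (\<Sum>i\<in>UNIV. \<Sum>j\<in>UNIV. (1/2) * (h i j * a i * b j) + (1/2) * (h i j * b i * a j))"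
    unfolding inner2_def sym_prod_def by (intro sum.cong refl) (simp add: algebra_simps)
  also have "\<dots> = (1/2) * tensor_form h a b + (1/2) * tensor_form h b a"
    unfolding tensor_form_def by (simp only: sum.distrib sum_distrib_left)
  finally show ?thesis
    using tensor_form_commute[OF assms] by simp
qed

lemma inner2_sym_prod_sym_prod:
  "inner2 (sym_prod a b) (sym_prod c d) = (dot a c * dot b d + dot a d * dot b c) / 2"
proof -
  have "inner2 (sym_prod a b) (sym_prod c d) = (\<Sum>i\<in>UNIV. \<Sum>j\<in>UNIV.
      (1/4) * ((a i * c i) * (b j * d j)) + (1/4) * ((a i * d i) * (b j * c j))
    + (1/4) * ((b i * c i) * (a j * d j)) + (1/4) * ((b i * d i) * (a j * c j)))"
    unfolding inner2_def sym_prod_def by (intro sum.cong refl) (simp add: algebra_simps)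
  also have "\<dots> = (1/4) * (dot a c * dot b d) + (1/4) * (dot a d * dot b c)
     + (1/4) * (dot b c * dot a d) + (1/4) * (dot b d * dot a c)"
    unfolding dot_def sum_product by (simp only: sum.distrib sum_distrib_left)
  finally show ?thesis
    by (simp add: algebra_simps)
qed

lemma trace2_sym_prod: "trace2 (sym_prod a b) = dot a b"
  unfolding trace2_def sym_prod_def dot_def by (simp add: mult.commute sum_divide_distrib[symmetric])

lemma sym_prod_commute: "sym_prod a b i j = sym_prod a b j i"
  unfolding sym_prod_def by (simp add: algebra_simps)

lemma sum_antisym_quadratic_form:
  fixes A :: "'n::finite \<Rightarrow> 'n \<Rightarrow> real"
  assumes "\<And>i k. A i k = - A k i"
  shows "(\<Sum>i\<in>UNIV. \<Sum>k\<in>UNIV. A i k * v i * v k) = 0"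
proof -
  let ?S = "\<Sum>i\<in>UNIV. \<Sum>k\<in>UNIV. A i k * v i * v k"
  have "?S = (\<Sum>k\<in>UNIV. \<Sum>i\<in>UNIV. A i k * v i * v k)"
    by (rule sum.swap)
  also have "\<dots> = (\<Sum>k\<in>UNIV. \<Sum>i\<in>UNIV. - (A k i * v k * v i))"
  proof (intro sum.cong refl)
    fix k i
    show "A i k * v i * v k = - (A k i * v k * v i)"
      using assms[of i k] by (simp add: mult_ac)
  qed
  also have "\<dots> = - ?S"
    by (simp add: sum_negf)
  finally show ?thesis
    by simp
qed

lemma curv_form_same_12:
  assumes "alg_curv_tensor R"
  shows "curv_form R a a c d = 0"
proof -
  define A where "A i j = (\<Sum>k\<in>UNIV. \<Sum>l\<in>UNIV. R i j k l * c k * d l)" for i j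
  have "curv_form R a a c d = (\<Sum>i\<in>UNIV. \<Sum>j\<in>UNIV. A i j * a i * a j)"
    unfolding curv_form_def A_def by (simp add: sum_distrib_left sum_distrib_right mult_ac)
  also have "\<dots> = 0"
  proof (rule sum_antisym_quadratic_form)
    fix i j
    show "A i j = - A j i"
      unfolding A_def using alg_curv_tensorD(1)[OF assms, of i j] by (simp add: sum_negf)
  qed
  finally show ?thesis .
qed

lemma curv_form_same_34:
  assumes "alg_curv_tensor R"
  shows "curv_form R a b c c = 0"
proof -
  define A where "A k l = (\<Sum>i\<in>UNIV. \<Sum>j\<in>UNIV. R i j k l * a i * b j)" for k l
  have "curv_form R a b c c = (\<Sum>k\<in>UNIV. \<Sum>l\<in>UNIV. \<Sum>i\<in>UNIV. \<Sum>j\<in>UNIV. R i j k l * a i * b j * c k * c l)"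
    unfolding curv_form_def by (rule sum_swap_pairs)
  also have "\<dots> = (\<Sum>k\<in>UNIV. \<Sum>l\<in>UNIV. A k l * c k * c l)"
    unfolding A_def by (simp add: sum_distrib_right)
  also have "\<dots> = 0"
  proof (rule sum_antisym_quadratic_form)
    fix k l
    show "A k l = - A l k"
      unfolding A_def using alg_curv_tensorD(2)[OF assms, of _ _ k l] by (simp add: sum_negf)
  qed
  finally show ?thesis .
qed

lemma curv_form_swap_pairs:
  assumes "alg_curv_tensor R"
  shows "curv_form R b a b a = curv_form R a b a b"
proof -
  have R: "R i j k l = R j i l k" for i j k l
    using alg_curv_tensorD(1,2)[OF assms] by (metis minus_minus)
  have "curv_form R b a b a = (\<Sum>i\<in>UNIV. \<Sum>j\<in>UNIV. \<Sum>k\<in>UNIV. \<Sum>l\<in>UNIV. R j i l k * b i * a j * b k * a l)"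
    unfolding curv_form_def by (simp only: R[of _ _ _ _])
  also have "\<dots> = (\<Sum>j\<in>UNIV. \<Sum>i\<in>UNIV. \<Sum>l\<in>UNIV. \<Sum>k\<in>UNIV. R j i l k * b i * a j * b k * a l)"
    by (subst sum.swap) (intro sum.cong refl sum.swap)
  also have "\<dots> = curv_form R a b a b"
    unfolding curv_form_def by (simp add: mult_ac)
  finally show ?thesis .
qed

lemma curv_quad_sym_prod:
  assumes "alg_curv_tensor R"
  shows "curv_quad R (sym_prod a b) = curv_form R a b a b / 2"
proof -
  have "curv_quad R (sym_prod a b) = (\<Sum>i\<in>UNIV. \<Sum>k\<in>UNIV. \<Sum>l\<in>UNIV. \<Sum>j\<in>UNIV.
      (1/4) * (R i k l j * a i * a k * b l * b j) + (1/4) * (R i k l j * b i * a k * b l * a j)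
    + (1/4) * (R i k l j * a i * b k * a l * b j) + (1/4) * (R i k l j * b i * b k * a l * a j))"
    unfolding curv_quad_expand sym_prod_def by (intro sum.cong refl) (simp add: field_simps)
  also have "\<dots> = (1/4) * curv_form R a a b b + (1/4) * curv_form R b a b a
      + (1/4) * curv_form R a b a b + (1/4) * curv_form R b b a a"
    unfolding curv_form_def by (simp only: sum.distrib sum_distrib_left)
  also have "\<dots> = curv_form R a b a b / 2"
    using curv_form_same_12[OF assms] curv_form_same_34[OF assms] curv_form_swap_pairs[OF assms]
    by simp
  finally show ?thesis .
qed

definition id_tensor :: "('n::finite) tensor2" where
  "id_tensor = (\<lambda>i j. if i = j then 1 else 0)"

definition radial_tensor :: "('n::finite \<Rightarrow> real) \<Rightarrow> 'n tensor2" where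
  "radial_tensor v = (\<lambda>i j. real CARD('n) * sym_prod v v i j - id_tensor i j)"

definition tangential_part :: "('n::finite \<Rightarrow> real) \<Rightarrow> 'n \<Rightarrow> 'n \<Rightarrow> real" where
  "tangential_part v i = (\<lambda>k. (if i = k then 1 else 0) - v i * v k)"

definition mixed_tensor :: "('n::finite \<Rightarrow> real) \<Rightarrow> 'n \<Rightarrow> 'n tensor2" where
  "mixed_tensor v i = sym_prod (tangential_part v i) v"

lemma inner2_id_tensor: "inner2 id_tensor h = trace2 h"
  using inner2_diag[of 1 h] by (simp add: id_tensor_def)

lemma inner2_id_tensor_right: "inner2 h id_tensor = trace2 h"
  using inner2_id_tensor inner2_commute by metis

lemma dot_tangential_part: "dot (tangential_part v i) v = v i - v i * dot v v"
proof -
  have "dot (tangential_part v i) v = (\<Sum>k\<in>UNIV. (if i = k then v k else 0) - v i * (v k * v k))"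
    unfolding dot_def tangential_part_def by (intro sum.cong refl) (auto simp: algebra_simps)
  also have "\<dots> = v i - v i * dot v v"
    unfolding dot_def by (simp add: sum_subtractf sum_distrib_left)
  finally show ?thesis .
qed

lemma dot_tangential_part_self:
  "dot (tangential_part v i) (tangential_part v i) = 1 - 2 * (v i)\<^sup>2 + (v i)\<^sup>2 * dot v v"
proof -
  have "dot (tangential_part v i) (tangential_part v i) = (\<Sum>k\<in>UNIV.
      (if i = k then 1 else 0) - 2 * v i * (if i = k then v k else 0) + (v i)\<^sup>2 * (v k * v k))"
    unfolding dot_def tangential_part_def
    by (intro sum.cong refl) (auto simp: algebra_simps power2_eq_square)
  also have "\<dots> = 1 - 2 * v i * v i + (v i)\<^sup>2 * dot v v"
    unfolding dot_def by (simp add: sum.distrib sum_subtractf sum_distrib_left[symmetric])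
  finally show ?thesis
    by (simp add: power2_eq_square)
qed

lemma traceless_sym_mixed_tensor: "dot v v = 1 \<Longrightarrow> traceless_sym (mixed_tensor v i)"
  unfolding traceless_sym_def mixed_tensor_def trace2_sym_prod dot_tangential_part
  using sym_prod_commute by auto

lemma sum_inner2_mixed_tensor_self:
  fixes v :: "'n::finite \<Rightarrow> real"
  assumes "dot v v = 1"
  shows "(\<Sum>i\<in>UNIV. inner2 (mixed_tensor v i) (mixed_tensor v i)) = (real CARD('n) - 1) / 2"
proof -
  have "(\<Sum>i\<in>UNIV. inner2 (mixed_tensor v i) (mixed_tensor v i)) = (\<Sum>i\<in>UNIV. (1 - (v i)\<^sup>2) / 2)"
    unfolding mixed_tensor_def inner2_sym_prod_sym_prod dot_tangential_part_self
      dot_tangential_part assms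
    by (simp add: dot_commute[of v])
  also have "\<dots> = (real CARD('n) - dot v v) / 2"
    unfolding dot_def by (simp add: sum_divide_distrib[symmetric] sum_subtractf power2_eq_square)
  finally show ?thesis
    using assms by simp
qed

lemma traceless_sym_radial_tensor: "dot v v = 1 \<Longrightarrow> traceless_sym (radial_tensor v)"
  unfolding traceless_sym_def radial_tensor_def
  using trace2_sym_prod[of v v] sym_prod_commute[of v v]
  by (simp add: trace2_def sum_subtractf sum_distrib_left[symmetric] id_tensor_def)

lemma inner2_radial_tensor:
  fixes h :: "('n::finite) tensor2"
  assumes "traceless_sym h"
  shows "inner2 h (radial_tensor v) = real CARD('n) * tensor_form h v v"
  using assms
  unfolding radial_tensor_def traceless_sym_def
  by (simp add: inner2_diff_right inner2_scale_right inner2_id_tensor_right inner2_sym_prod)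

lemma inner2_radial_tensor_self:
  fixes v :: "'n::finite \<Rightarrow> real"
  assumes "dot v v = 1"
  shows "inner2 (radial_tensor v) (radial_tensor v) = real CARD('n) * (real CARD('n) - 1)"
proof -
  have "tensor_form (radial_tensor v) v v = inner2 (radial_tensor v) (sym_prod v v)"
    using traceless_sym_radial_tensor[OF assms] unfolding traceless_sym_def
    by (simp add: inner2_sym_prod)
  also have "\<dots> = real CARD('n) - 1"
    using assms unfolding radial_tensor_def
    by (simp add: inner2_diff_left inner2_scale_left inner2_sym_prod_sym_prod inner2_id_tensor
        trace2_sym_prod)
  finally show ?thesis
    by (simp add: inner2_radial_tensor[OF traceless_sym_radial_tensor[OF assms]])
qed

definition tangential_image :: "('n::finite) tensor2 \<Rightarrow> ('n \<Rightarrow> real) \<Rightarrow> 'n \<Rightarrow> real" where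
  "tangential_image h v = (\<lambda>i. (\<Sum>l\<in>UNIV. h i l * v l) - v i * tensor_form h v v)"

lemma inner2_mixed_tensor:
  assumes "\<forall>i j. h i j = h j i"
  shows "inner2 h (mixed_tensor v i) = tangential_image h v i"
proof -
  have "inner2 h (mixed_tensor v i) = tensor_form h (tangential_part v i) v"
    unfolding mixed_tensor_def by (rule inner2_sym_prod[OF assms])
  also have "\<dots> = (\<Sum>k\<in>UNIV. \<Sum>l\<in>UNIV. (if i = k then h k l * v l else 0) - v i * (h k l * v k * v l))"
    unfolding tensor_form_def tangential_part_def by (intro sum.cong refl) (simp add: algebra_simps)
  also have "\<dots> = tangential_image h v i"
    unfolding tangential_image_def tensor_form_def
    by (simp add: sum_subtractf sum_if_cond_const sum_distrib_left)
  finally show ?thesis .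
qed

lemma dot_tangential_image:
  assumes "dot v v = 1"
  shows "dot v (tangential_image h v) = 0"
proof -
  have "dot v (tangential_image h v) = (\<Sum>i\<in>UNIV. \<Sum>l\<in>UNIV. v i * h i l * v l) - tensor_form h v v * dot v v"
    unfolding dot_def tangential_image_def
    by (simp add: right_diff_distrib sum_subtractf sum_distrib_left sum_distrib_right mult_ac)
  then show ?thesis
    using assms by (simp add: tensor_form_def mult_ac)
qed

lemma inner2_sym_prod_tangential_image:
  assumes "\<forall>i j. h i j = h j i" and "dot v v = 1"
  defines "p \<equiv> tangential_image h v"
  shows "inner2 h (sym_prod v p) = dot p p"
proof -
  have "inner2 h (sym_prod v p) = (\<Sum>i\<in>UNIV. p i * (\<Sum>l\<in>UNIV. h i l * v l))"
    using inner2_sym_prod[OF assms(1), of v p] tensor_form_commute[OF assms(1), of v p]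
    by (simp add: tensor_form_def sum_distrib_left mult_ac)
  also have "\<dots> = (\<Sum>i\<in>UNIV. p i * (p i + v i * tensor_form h v v))"
    unfolding p_def tangential_image_def by simp
  also have "\<dots> = dot p p + tensor_form h v v * dot p v"
    unfolding dot_def by (simp add: algebra_simps sum.distrib sum_distrib_left)
  finally show ?thesis
    using dot_tangential_image[OF assms(2), of h] dot_commute[of v] unfolding p_def by simp
qed

lemma curv_quad_scale_diff:
  assumes "alg_curv_tensor R"
  shows "curv_quad R (\<lambda>i j. s * m i j - w i j)
    = s\<^sup>2 * curv_quad R m - 2 * s * inner2 (Rbar R m) w + curv_quad R w"
proof -
  have "(\<lambda>i j. s * m i j - w i j) = (\<lambda>i j. (\<lambda>i j. s * m i j) i j + (-1) * w i j)"
    by simp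
  then show ?thesis
    using curv_quad_axpy[OF assms, of "\<lambda>i j. s * m i j" "-1" w]
    by (simp add: curv_quad_scale Rbar_scale inner2_scale_left)
qed

lemma Rbar_id_tensor:
  assumes "alg_curv_tensor R"
  shows "Rbar R id_tensor = (\<lambda>i j. - ricci R i j)"
proof -
  have "Rbar R id_tensor i j = (\<Sum>k\<in>UNIV. R i k k j)" for i j
    unfolding Rbar_def id_tensor_def
    by (simp add: if_distrib[where f = "\<lambda>x. _ * x"] sum.delta cong: if_cong)
  then show ?thesis
    using alg_curv_tensorD(1)[OF assms, of i k k j for i k j]
    by (simp add: ricci_def sum_negf fun_eq_iff)
qed

lemma curv_quad_radial_tensor:
  fixes R :: "('n::finite) tensor4"
  assumes "alg_curv_tensor R"
  shows "curv_quad R (radial_tensor v) = 2 * real CARD('n) * ricci_form R v - scal R"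
proof -
  have sym: "\<forall>i j. Rbar R id_tensor i j = Rbar R id_tensor j i"
    using Rbar_sym[OF assms, of id_tensor] by (simp add: id_tensor_def)
  have "inner2 (Rbar R (sym_prod v v)) id_tensor = - ricci_form R v"
    using inner2_sym_prod[OF sym, of v v]
    by (simp add: Rbar_self_adjoint[OF assms] inner2_commute[of "sym_prod v v"] Rbar_id_tensor[OF assms]
        tensor_form_def ricci_form_def sum_negf)
  moreover have "curv_quad R id_tensor = - scal R"
    by (simp add: curv_quad_def inner2_id_tensor_right Rbar_id_tensor[OF assms] scal_def trace2_def sum_negf)
  moreover have "curv_quad R (sym_prod v v) = 0"
    by (simp add: curv_quad_sym_prod[OF assms] curv_form_same_12[OF assms])
  ultimately show ?thesis
    unfolding radial_tensor_def curv_quad_scale_diff[OF assms] by simp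
qed

lemma curv_form_diff_1:
  "curv_form R (\<lambda>p. x p - c * y p) b z d = curv_form R x b z d - c * curv_form R y b z d"
proof -
  have "R i j k l * (x i - c * y i) * b j * z k * d l
      = R i j k l * x i * b j * z k * d l - c * (R i j k l * y i * b j * z k * d l)" for i j k l
    by (simp add: algebra_simps)
  then show ?thesis
    unfolding curv_form_def by (simp only: sum_subtractf sum_distrib_left)
qed

lemma curv_form_diff_3:
  "curv_form R a b (\<lambda>p. x p - c * y p) d = curv_form R a b x d - c * curv_form R a b y d"
proof -
  have "R i j k l * a i * b j * (x k - c * y k) * d l
      = R i j k l * a i * b j * x k * d l - c * (R i j k l * a i * b j * y k * d l)" for i j k l
    by (simp add: algebra_simps)
  then show ?thesis
    unfolding curv_form_def by (simp only: sum_subtractf sum_distrib_left)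
qed

lemma curv_form_basis_13:
  "curv_form R (\<lambda>p. if i = p then 1 else 0) b (\<lambda>p. if i = p then 1 else 0) d
     = (\<Sum>j\<in>UNIV. \<Sum>l\<in>UNIV. R i j i l * b j * d l)"
proof -
  have "R p q r s * (if i = p then 1 else 0) * b q * (if i = r then 1 else 0) * d s
      = (if i = p then if i = r then R p q r s * b q * d s else 0 else 0)" for p q r s
    by simp
  then show ?thesis
    unfolding curv_form_def by (simp add: sum_if_cond_const sum.delta')
qed

lemma sum_curv_quad_mixed_tensor:
  fixes R :: "('n::finite) tensor4"
  assumes "alg_curv_tensor R"
  shows "(\<Sum>i\<in>UNIV. curv_quad R (mixed_tensor v i)) = ricci_form R v / 2"
proof -
  let ?e = "\<lambda>i p. if i = p then 1 else (0::real)"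
  have "curv_form R (tangential_part v i) v (tangential_part v i) v = curv_form R (?e i) v (?e i) v" for i
    unfolding tangential_part_def curv_form_diff_1 curv_form_diff_3
    using curv_form_same_12[OF assms] curv_form_same_34[OF assms] by simp
  then have "(\<Sum>i\<in>UNIV. curv_form R (tangential_part v i) v (tangential_part v i) v)
      = (\<Sum>i\<in>UNIV. \<Sum>j\<in>UNIV. \<Sum>l\<in>UNIV. R i j i l * v j * v l)"
    by (simp add: curv_form_basis_13)
  also have "\<dots> = ricci_form R v"
    unfolding ricci_form_def ricci_def by (subst sum_rotate3) (simp add: sum_distrib_right)
  finally show ?thesis
    unfolding mixed_tensor_def curv_quad_sym_prod[OF assms] sum_divide_distrib[symmetric] by simp
qed

lemma inner2_axpy2_self:
  "inner2 (\<lambda>i j. a i j + s * b i j + t * c i j) (\<lambda>i j. a i j + s * b i j + t * c i j)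
   = inner2 a a + s\<^sup>2 * inner2 b b + t\<^sup>2 * inner2 c c + 2 * s * inner2 a b + 2 * t * inner2 a c
     + 2 * s * t * inner2 b c"
  using inner2_axpy_self[of "\<lambda>i j. a i j + s * b i j" t c] inner2_axpy_self[of a s b]
    inner2_axpy_left[of a s b c]
  by (simp add: algebra_simps)

text \<open>With p the tangential image and c = h(v,v) / (n - 1), the residual h - 2 v \<odot> p - c H is
  orthogonal to the radial tensor H and to all mixed tensors; expanding its squared norm gives
  the bound.\<close>
lemma radial_mixed_bessel:
  fixes h :: "('n::finite) tensor2" and v :: "'n \<Rightarrow> real"
  assumes h: "traceless_sym h" and v: "dot v v = 1" and n: "2 \<le> CARD('n)"
  shows "real CARD('n) * (tensor_form h v v)\<^sup>2 / (real CARD('n) - 1)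
     + 2 * (\<Sum>i\<in>UNIV. (inner2 h (mixed_tensor v i))\<^sup>2) \<le> inner2 h h"
proof -
  let ?n = "real CARD('n)" and ?p = "tangential_image h v"
  have sym: "\<forall>i j. h i j = h j i"
    using h unfolding traceless_sym_def by auto
  define a where "a = tensor_form h v v"
  define c where "c = a / (?n - 1)"
  have "?n - 1 > 0"
    using n by simp
  then have "c\<^sup>2 * (?n * (?n - 1)) = ?n * a * c"
    unfolding c_def by (simp add: power2_eq_square)
  moreover have "inner2 (sym_prod v ?p) (radial_tensor v) = 0"
    unfolding radial_tensor_def
    by (simp add: inner2_diff_right inner2_scale_right inner2_id_tensor_right trace2_sym_prod
        inner2_sym_prod_sym_prod v dot_tangential_image[OF v] dot_commute[of ?p v])
  moreover have "0 \<le> inner2 (\<lambda>i j. h i j + (-2) * sym_prod v ?p i j + (- c) * radial_tensor v i j)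
                    (\<lambda>i j. h i j + (-2) * sym_prod v ?p i j + (- c) * radial_tensor v i j)"
    by (rule inner2_self_nonneg)
  ultimately have "?n * a * c + 2 * dot ?p ?p \<le> inner2 h h"
    unfolding inner2_axpy2_self inner2_sym_prod_tangential_image[OF sym v] inner2_sym_prod_sym_prod
      inner2_radial_tensor[OF h] inner2_radial_tensor_self[OF v] a_def[symmetric]
    by (simp add: algebra_simps power2_eq_square v dot_tangential_image[OF v])
  moreover have "(\<Sum>i\<in>UNIV. (inner2 h (mixed_tensor v i))\<^sup>2) = dot ?p ?p"
    unfolding inner2_mixed_tensor[OF sym] dot_def by (simp add: power2_eq_square)
  ultimately show ?thesis
    unfolding a_def[symmetric] c_def by (simp add: power2_eq_square)
qed

section \<open>Weighted sums of sorted eigenvalues\<close>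

definition greedy_weight :: "real \<Rightarrow> nat \<Rightarrow> real" where
  "greedy_weight \<alpha> a = (if a < nat \<lfloor>\<alpha>\<rfloor> then 1 else if a = nat \<lfloor>\<alpha>\<rfloor> then frac \<alpha> else 0)"

lemma sum_greedy_weight_eq:
  assumes "0 \<le> \<alpha>" and "\<alpha> < real N"
  shows "(\<Sum>a<N. f a * greedy_weight \<alpha> a) = (\<Sum>a<nat \<lfloor>\<alpha>\<rfloor>. f a) + frac \<alpha> * f (nat \<lfloor>\<alpha>\<rfloor>)"
proof -
  let ?m = "nat \<lfloor>\<alpha>\<rfloor>"
  have "?m < N"
    using assms by linarith
  then have "{..<N} \<inter> {a. a < ?m} = {..<?m}"
    by auto
  have "(\<Sum>a<N. f a * greedy_weight \<alpha> a)
      = (\<Sum>a<N. (if a \<in> {..<?m} then f a else 0) + (if a = ?m then frac \<alpha> * f a else 0))"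
    unfolding greedy_weight_def by (intro sum.cong refl) auto
  also have "\<dots> = (\<Sum>a<?m. f a) + frac \<alpha> * f ?m"
    using \<open>?m < N\<close> \<open>{..<N} \<inter> {a. a < ?m} = {..<?m}\<close> by (simp add: sum.distrib sum.If_cases)
  finally show ?thesis .
qed

lemma partial_eig_sum_eq_greedy:
  "0 \<le> \<alpha> \<Longrightarrow> \<alpha> < real N \<Longrightarrow> partial_eig_sum L \<alpha> = (\<Sum>a<N. L ! a * greedy_weight \<alpha> a)"
  by (simp add: sum_greedy_weight_eq partial_eig_sum_def frac_def)

lemma sum_greedy_weight:
  "0 \<le> \<alpha> \<Longrightarrow> \<alpha> < real N \<Longrightarrow> (\<Sum>a<N. greedy_weight \<alpha> a) = \<alpha>"
  using sum_greedy_weight_eq[of \<alpha> N "\<lambda>_. 1"] by (simp add: frac_def)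

text \<open>The partial eigenvalue sum is the weighted sum for the greedy weights, which fill the
  smallest entries first; among all weights in [0,1] of total mass alpha they minimise it.\<close>
lemma partial_eig_sum_le_weighted_sum:
  fixes L :: "real list" and c :: "nat \<Rightarrow> real"
  assumes "sorted L" and "length L = N"
    and "\<forall>a<N. 0 \<le> c a \<and> c a \<le> 1" and "(\<Sum>a<N. c a) = \<alpha>"
    and "0 \<le> \<alpha>" and "\<alpha> < real N"
  shows "partial_eig_sum L \<alpha> \<le> (\<Sum>a<N. L ! a * c a)"
proof -
  let ?m = "nat \<lfloor>\<alpha>\<rfloor>" and ?d = "greedy_weight \<alpha>"
  have "?m < N"
    using assms(5,6) by linarith
  have "0 \<le> (L ! a - L ! ?m) * (c a - ?d a)" if "a < N" for a
  proof (cases a ?m rule: linorder_cases)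
    case less
    then show ?thesis
      using assms(1-3) that \<open>?m < N\<close>
      by (intro mult_nonpos_nonpos) (auto simp: sorted_nth_mono greedy_weight_def)
  next
    case greater
    then show ?thesis
      using assms(1-3) that by (intro mult_nonneg_nonneg) (auto simp: sorted_nth_mono greedy_weight_def)
  qed simp
  then have "0 \<le> (\<Sum>a<N. (L ! a - L ! ?m) * (c a - ?d a))"
    by (intro sum_nonneg) auto
  also have "\<dots> = (\<Sum>a<N. L ! a * c a) - (\<Sum>a<N. L ! a * ?d a) - L ! ?m * ((\<Sum>a<N. c a) - (\<Sum>a<N. ?d a))"
    by (simp add: algebra_simps sum.distrib sum_subtractf sum_distrib_left sum_distrib_right)
  finally show ?thesis
    using assms(4-6) by (simp add: partial_eig_sum_eq_greedy sum_greedy_weight)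
qed

section \<open>Choice of the interpolation parameters\<close>

lemma Theta_bar_balance_large:
  fixes n :: nat and \<alpha> t :: real
  assumes "3 \<le> n" and "real n < \<alpha>" and \<alpha>: "\<alpha> = real n + t * ((real n - 2) * (real n + 1) / 2)"
  shows "t * (1/2 + 1 / real n) - (1 - t) / (real n * (real n - 1))
    + Theta_bar n \<alpha> * \<alpha> / (real n * (real n - 1)) = 0"
proof -
  have "real n - 2 > 0" and "real n \<noteq> 0" and "real n - 1 \<noteq> 0"
    using assms(1) by auto
  have "real n * (real n - \<alpha>) / (real n - 2) = - t * real n * (real n + 1) / 2"
    using \<open>real n - 2 > 0\<close> by (subst \<alpha>) (simp add: field_simps)
  moreover have "Theta_bar n \<alpha> * \<alpha> = 1 + real n * (real n - \<alpha>) / (real n - 2)"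
    using assms(2) \<open>real n - 2 > 0\<close> \<open>real n \<noteq> 0\<close> unfolding Theta_bar_def
    by (simp add: field_simps)
  ultimately have \<Theta>: "Theta_bar n \<alpha> * \<alpha> = 1 - t * real n * (real n + 1) / 2"
    by simp
  show ?thesis
    unfolding \<Theta> using \<open>real n \<noteq> 0\<close> \<open>real n - 1 \<noteq> 0\<close> by (simp add: field_simps)
qed

text \<open>Theta_bar n alpha is exactly the constant for which the scalar curvature cancels out of
  the estimate obtained from the test weights.\<close>
lemma Theta_bar_interpolation:
  fixes n :: nat and \<alpha> :: real
  assumes "3 \<le> n" and "1 \<le> \<alpha>" and "\<alpha> < real (dimS20 n)"
  obtains t w where "0 \<le> t" and "t \<le> w" and "w \<le> 1" and "t < 1"
    and "t * real (dimS20 n) + (1 - t) + (w - t) * (real n - 1) = \<alpha>"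
    and "t * (1/2 + 1 / real n) - (1 - t) / (real n * (real n - 1))
      + Theta_bar n \<alpha> * \<alpha> / (real n * (real n - 1)) = 0"
proof (cases "\<alpha> \<le> real n")
  case True
  show ?thesis
  proof (rule that[of 0 "(\<alpha> - 1) / (real n - 1)"])
    show "0 * real (dimS20 n) + (1 - 0) + ((\<alpha> - 1) / (real n - 1) - 0) * (real n - 1) = \<alpha>"
      using assms(1) by simp
    show "0 * (1/2 + 1 / real n) - (1 - 0) / (real n * (real n - 1))
      + Theta_bar n \<alpha> * \<alpha> / (real n * (real n - 1)) = 0"
      using True assms(2) by (simp add: Theta_bar_def)
  qed (use True assms in auto)
next
  case False
  define N where "N = real (dimS20 n)"
  have N: "N = (real n - 1) * (real n + 2) / 2"
    unfolding N_def using assms(1) by (simp add: real_dimS20)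
  define t where "t = (\<alpha> - real n) / (N - real n)"
  have D: "N - real n = (real n - 2) * (real n + 1) / 2"
    unfolding N by (simp add: field_simps)
  have "real n - 2 > 0"
    using assms(1) by simp
  then have "0 < N - real n"
    unfolding D by simp
  then have tN: "t * (N - real n) = \<alpha> - real n"
    unfolding t_def by simp
  then have \<alpha>: "\<alpha> = real n + t * ((real n - 2) * (real n + 1) / 2)"
    unfolding D by linarith
  have t: "0 \<le> t" "t < 1"
    using False assms(3) \<open>0 < N - real n\<close> unfolding t_def N_def by auto
  show ?thesis
  proof (rule that[of t 1])
    have "t * N + (1 - t) + (1 - t) * (real n - 1) = t * (N - real n) + real n"
      by (simp add: algebra_simps)
    then show "t * real (dimS20 n) + (1 - t) + (1 - t) * (real n - 1) = \<alpha>"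
      using tN by (simp add: N_def)
    show "t * (1/2 + 1 / real n) - (1 - t) / (real n * (real n - 1))
      + Theta_bar n \<alpha> * \<alpha> / (real n * (real n - 1)) = 0"
      using False by (intro Theta_bar_balance_large[OF assms(1) _ \<alpha>]) simp
  qed (use t in auto)
qed

lemma test_bound_plus_scal_term:
  fixes n t w S r :: real
  assumes "n \<noteq> 0" and "n - 1 \<noteq> 0"
  shows "t * ((1/2 + 1 / n) * S) + (1 - t) * ((2 * n * r - S) / (n * (n - 1))) + (w - t) * r
      + S * ((1 - t) / (n * (n - 1)) - t * (1/2 + 1 / n)) = (2 * (1 - t) / (n - 1) + (w - t)) * r"
proof -
  have "2 / (n - 1) * r = (n * (2 * r)) / (n * (n - 1))"
    using assms(1) by simp
  then have e: "(2 * n * r - S) / (n * (n - 1)) = 2 / (n - 1) * r - S / (n * (n - 1))"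
    by (simp add: diff_divide_distrib mult.left_commute)
  show ?thesis
    unfolding e by (simp add: algebra_simps)
qed

lemma interpolated_weight_bounds:
  fixes t w x y :: real
  assumes "0 \<le> t" and "t \<le> w" and "w \<le> 1" and "0 \<le> x" and "0 \<le> y" and "x + y \<le> 1"
  shows "0 \<le> t + (1 - t) * x + (w - t) * y" and "t + (1 - t) * x + (w - t) * y \<le> 1"
proof -
  show "0 \<le> t + (1 - t) * x + (w - t) * y"
    using assms by (intro add_nonneg_nonneg mult_nonneg_nonneg) auto
  have "(w - t) * y \<le> (1 - t) * y"
    using assms by (intro mult_right_mono) auto
  moreover have "(1 - t) * x + (1 - t) * y \<le> 1 - t"
    using assms mult_left_le[of "x + y" "1 - t"] by (simp add: distrib_left)
  ultimately show "t + (1 - t) * x + (w - t) * y \<le> 1"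
    by linarith
qed

section \<open>Ricci curvature from the cone condition\<close>

definition radial_weight :: "('n::finite) tensor2 \<Rightarrow> ('n \<Rightarrow> real) \<Rightarrow> real" where
  "radial_weight h v = (inner2 h (radial_tensor v))\<^sup>2 / (real CARD('n) * (real CARD('n) - 1))"

definition mixed_weight :: "('n::finite) tensor2 \<Rightarrow> ('n \<Rightarrow> real) \<Rightarrow> real" where
  "mixed_weight h v = 2 * (\<Sum>i\<in>UNIV. (inner2 h (mixed_tensor v i))\<^sup>2)"

lemma mixed_weight_nonneg: "0 \<le> mixed_weight h v"
  unfolding mixed_weight_def by (simp add: sum_nonneg)

lemma radial_weight_nonneg: "2 \<le> CARD('n) \<Longrightarrow> 0 \<le> radial_weight h v"
  for h :: "('n::finite) tensor2"
  unfolding radial_weight_def by simp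

lemma radial_weight_plus_mixed_weight_le_1:
  fixes h :: "('n::finite) tensor2"
  assumes "traceless_sym h" and "inner2 h h = 1" and "dot v v = 1" and "2 \<le> CARD('n)"
  shows "radial_weight h v + mixed_weight h v \<le> 1"
proof -
  have "radial_weight h v = real CARD('n) * (tensor_form h v v)\<^sup>2 / (real CARD('n) - 1)"
    unfolding radial_weight_def inner2_radial_tensor[OF assms(1)]
    by (simp add: power2_eq_square)
  then show ?thesis
    using radial_mixed_bessel[OF assms(1,3,4)] assms(2) unfolding mixed_weight_def by simp
qed

locale curv_eigenbasis =
  fixes R :: "('n::finite) tensor4" and e :: "nat \<Rightarrow> 'n tensor2" and L :: "real list"
  assumes alg_curv: "alg_curv_tensor R"
    and orthonormal: "orthonormal_family e (dimS20 CARD('n))"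
    and eigen: "\<forall>a<dimS20 CARD('n). curv_op2 R (e a) = (\<lambda>i j. L ! a * e a i j)"
    and sorted: "sorted L" and length: "length L = dimS20 CARD('n)"
begin

lemma sum_sq_inner2_basis:
  "traceless_sym X \<Longrightarrow> (\<Sum>a<dimS20 CARD('n). (inner2 (e a) X)\<^sup>2) = inner2 X X"
  using parseval[OF orthonormal, of X X]
  by (simp add: inner2_commute[of X "e _"] power2_eq_square)

lemma eigenvalue_eq_curv_quad: "a < dimS20 CARD('n) \<Longrightarrow> L ! a = curv_quad R (e a)"
  using orthonormal eigen unfolding orthonormal_family_def
  by (simp add: curv_quad_unit_eigenvector)

lemma spectral_expansion:
  assumes "traceless_sym X"
  shows "(\<Sum>a<dimS20 CARD('n). L ! a * (inner2 (e a) X)\<^sup>2) = curv_quad R X"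
proof -
  have "inner2 (curv_op2 R X) (e a) = L ! a * inner2 (e a) X" if "a < dimS20 CARD('n)" for a
  proof -
    have "traceless_sym (e a)"
      using orthonormal that unfolding orthonormal_family_def by simp
    then have "inner2 (curv_op2 R X) (e a) = inner2 X (Rbar R (e a))"
      by (simp add: inner2_curv_op2 Rbar_self_adjoint[OF alg_curv])
    also have "\<dots> = inner2 (curv_op2 R (e a)) X"
      using assms by (simp add: inner2_commute[of X "Rbar R (e a)"] inner2_curv_op2)
    finally show ?thesis
      using eigen that by (simp add: inner2_scale_left)
  qed
  then have "(\<Sum>a<dimS20 CARD('n). L ! a * (inner2 (e a) X)\<^sup>2)
      = (\<Sum>a<dimS20 CARD('n). inner2 (curv_op2 R X) (e a) * inner2 (e a) X)"
    by (simp add: power2_eq_square mult.assoc)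
  also have "\<dots> = curv_quad R X"
    using assms by (simp add: parseval[OF orthonormal traceless_sym_curv_op2[OF alg_curv]]
        curv_quad_eq_inner2_curv_op2)
  finally show ?thesis .
qed

lemma sum_eigenvalues: "(\<Sum>a<dimS20 CARD('n). L ! a) = (1/2 + 1 / real CARD('n)) * scal R"
  using sum_curv_quad_orthonormal_basis[OF alg_curv orthonormal] eigenvalue_eq_curv_quad by simp


lemma sum_radial_weight:
  assumes "dot v v = 1" and "2 \<le> CARD('n)"
  shows "(\<Sum>a<dimS20 CARD('n). radial_weight (e a) v) = 1"
  using assms sum_sq_inner2_basis[OF traceless_sym_radial_tensor[OF assms(1)]]
  by (simp add: radial_weight_def sum_divide_distrib[symmetric] inner2_radial_tensor_self)

lemma sum_eigen_radial_weight:
  "(\<Sum>a<dimS20 CARD('n). L ! a * radial_weight (e a) v)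
     = (2 * real CARD('n) * ricci_form R v - scal R) / (real CARD('n) * (real CARD('n) - 1))"
  if "dot v v = 1"
  using spectral_expansion[OF traceless_sym_radial_tensor[OF that]]
  by (simp add: radial_weight_def sum_divide_distrib[symmetric] curv_quad_radial_tensor[OF alg_curv])

lemma sum_mixed_weight:
  assumes "dot v v = 1"
  shows "(\<Sum>a<dimS20 CARD('n). mixed_weight (e a) v) = real CARD('n) - 1"
proof -
  have "(\<Sum>a<dimS20 CARD('n). mixed_weight (e a) v)
      = 2 * (\<Sum>a<dimS20 CARD('n). \<Sum>i\<in>UNIV. (inner2 (e a) (mixed_tensor v i))\<^sup>2)"
    unfolding mixed_weight_def by (simp add: sum_distrib_left)
  also have "\<dots> = 2 * (\<Sum>i\<in>UNIV. \<Sum>a<dimS20 CARD('n). (inner2 (e a) (mixed_tensor v i))\<^sup>2)"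
    by (subst sum.swap) (rule refl)
  also have "\<dots> = real CARD('n) - 1"
    using assms by (simp add: sum_sq_inner2_basis traceless_sym_mixed_tensor sum_inner2_mixed_tensor_self)
  finally show ?thesis .
qed

lemma sum_eigen_mixed_weight:
  assumes "dot v v = 1"
  shows "(\<Sum>a<dimS20 CARD('n). L ! a * mixed_weight (e a) v) = ricci_form R v"
proof -
  have "(\<Sum>a<dimS20 CARD('n). L ! a * mixed_weight (e a) v)
      = 2 * (\<Sum>a<dimS20 CARD('n). \<Sum>i\<in>UNIV. L ! a * (inner2 (e a) (mixed_tensor v i))\<^sup>2)"
    unfolding mixed_weight_def by (simp add: sum_distrib_left mult.left_commute)
  also have "\<dots> = 2 * (\<Sum>i\<in>UNIV. \<Sum>a<dimS20 CARD('n). L ! a * (inner2 (e a) (mixed_tensor v i))\<^sup>2)"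
    by (subst sum.swap) (rule refl)
  also have "\<dots> = ricci_form R v"
    using assms by (simp add: spectral_expansion traceless_sym_mixed_tensor sum_curv_quad_mixed_tensor[OF alg_curv])
  finally show ?thesis .
qed


lemma partial_eig_sum_le_test_bound:
  assumes v: "dot v v = 1" and n: "2 \<le> CARD('n)"
    and t: "0 \<le> t" "t \<le> w" "w \<le> 1"
    and \<alpha>: "t * real (dimS20 CARD('n)) + (1 - t) + (w - t) * (real CARD('n) - 1) = \<alpha>"
      "\<alpha> < real (dimS20 CARD('n))"
  shows "partial_eig_sum L \<alpha> \<le> t * ((1/2 + 1 / real CARD('n)) * scal R)
    + (1 - t) * ((2 * real CARD('n) * ricci_form R v - scal R) / (real CARD('n) * (real CARD('n) - 1)))
    + (w - t) * ricci_form R v"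
proof -
  let ?N = "dimS20 CARD('n)"
  define c where "c a = t + (1 - t) * radial_weight (e a) v + (w - t) * mixed_weight (e a) v" for a
  have "0 \<le> c a \<and> c a \<le> 1" if "a < ?N" for a
  proof -
    have "traceless_sym (e a)" and "inner2 (e a) (e a) = 1"
      using orthonormal that unfolding orthonormal_family_def by auto
    then show ?thesis
      unfolding c_def
      using interpolated_weight_bounds[OF t radial_weight_nonneg[OF n] mixed_weight_nonneg
          radial_weight_plus_mixed_weight_le_1[OF _ _ v n]]
      by simp
  qed
  moreover have "(\<Sum>a<?N. c a) = \<alpha>"
    using \<alpha>(1) v n unfolding c_def
    by (simp add: sum.distrib sum_distrib_left[symmetric] sum_radial_weight sum_mixed_weight
        mult.commute)
  moreover have "0 \<le> \<alpha>"
  proof -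
    have "0 \<le> t * real ?N" and "0 \<le> (w - t) * (real CARD('n) - 1)"
      using t n by simp_all
    then show ?thesis
      using \<alpha>(1) t by linarith
  qed
  ultimately have "partial_eig_sum L \<alpha> \<le> (\<Sum>a<?N. L ! a * c a)"
    using partial_eig_sum_le_weighted_sum[OF sorted length] \<alpha>(2) by blast
  also have "\<dots> = (\<Sum>a<?N. t * L ! a + (1 - t) * (L ! a * radial_weight (e a) v)
      + (w - t) * (L ! a * mixed_weight (e a) v))"
    unfolding c_def by (intro sum.cong refl) (simp add: algebra_simps)
  also have "\<dots> = t * (\<Sum>a<?N. L ! a) + (1 - t) * (\<Sum>a<?N. L ! a * radial_weight (e a) v)
      + (w - t) * (\<Sum>a<?N. L ! a * mixed_weight (e a) v)"
    by (simp only: sum.distrib sum_distrib_left)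
  finally show ?thesis
    using v by (simp add: sum_eigenvalues sum_eigen_radial_weight sum_eigen_mixed_weight)
qed

lemma eig_average_eq_scal:
  assumes "2 \<le> CARD('n)"
  shows "eig_average L = scal R / (real CARD('n) * (real CARD('n) - 1))"
proof -
  let ?n = "real CARD('n)" and ?N = "real (dimS20 CARD('n))"
  have N: "?N = (?n - 1) * (?n + 2) / 2"
    by (rule real_dimS20) simp
  have "?n \<noteq> 0" and "?n - 1 \<noteq> 0" and "?N \<noteq> 0"
    using assms unfolding N by auto
  have "(1/2 + 1 / ?n) * scal R * (?n * (?n - 1)) = ((1/2 + 1 / ?n) * ?n) * scal R * (?n - 1)"
    by (simp add: mult_ac)
  also have "\<dots> = scal R * ?N"
    using \<open>?n \<noteq> 0\<close> unfolding N by (simp add: field_simps)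
  finally have "(1/2 + 1 / ?n) * scal R / ?N = scal R / (?n * (?n - 1))"
    using \<open>?n \<noteq> 0\<close> \<open>?n - 1 \<noteq> 0\<close> \<open>?N \<noteq> 0\<close> by (simp add: frac_eq_eq)
  then show ?thesis
    using length sum_eigenvalues by (simp add: eig_average_def sum_list_sum_nth atLeast0LessThan)
qed

lemma cone_gap_le_ricci_form:
  assumes "dot v v = 1" and "3 \<le> CARD('n)" and "1 \<le> \<alpha>" and "\<alpha> < real (dimS20 CARD('n))"
  obtains \<kappa> where "0 < \<kappa>"
    and "partial_eig_sum L \<alpha> + Theta_bar CARD('n) \<alpha> * \<alpha> * eig_average L \<le> \<kappa> * ricci_form R v"
proof -
  let ?n = "real CARD('n)" and ?S = "scal R" and ?r = "ricci_form R v"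
  obtain t w where t: "0 \<le> t" "t \<le> w" "w \<le> 1" "t < 1"
    and \<alpha>: "t * real (dimS20 CARD('n)) + (1 - t) + (w - t) * (?n - 1) = \<alpha>"
    and balance: "t * (1/2 + 1 / ?n) - (1 - t) / (?n * (?n - 1))
      + Theta_bar CARD('n) \<alpha> * \<alpha> / (?n * (?n - 1)) = 0"
    using Theta_bar_interpolation[OF assms(2-4)] by blast
  define \<kappa> where "\<kappa> = 2 * (1 - t) / (?n - 1) + (w - t)"
  have "?n \<noteq> 0" and "?n - 1 > 0"
    using assms(2) by auto
  define \<Theta> where "\<Theta> = Theta_bar CARD('n) \<alpha> * \<alpha>"
  have "\<Theta> / (?n * (?n - 1)) = (1 - t) / (?n * (?n - 1)) - t * (1/2 + 1 / ?n)"
    using balance unfolding \<Theta>_def[symmetric] by linarith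
  moreover have "\<Theta> * eig_average L = ?S * (\<Theta> / (?n * (?n - 1)))"
    using assms(2) by (simp add: eig_average_eq_scal mult.commute)
  ultimately have "\<Theta> * eig_average L = ?S * ((1 - t) / (?n * (?n - 1)) - t * (1/2 + 1 / ?n))"
    by simp
  moreover have "partial_eig_sum L \<alpha> \<le> t * ((1/2 + 1 / ?n) * ?S)
    + (1 - t) * ((2 * ?n * ?r - ?S) / (?n * (?n - 1))) + (w - t) * ?r"
    using partial_eig_sum_le_test_bound[OF assms(1) _ t(1-3) \<alpha> assms(4)] assms(2) by simp
  moreover have "t * ((1/2 + 1 / ?n) * ?S) + (1 - t) * ((2 * ?n * ?r - ?S) / (?n * (?n - 1)))
      + (w - t) * ?r + ?S * ((1 - t) / (?n * (?n - 1)) - t * (1/2 + 1 / ?n)) = \<kappa> * ?r"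
    unfolding \<kappa>_def using \<open>?n \<noteq> 0\<close> \<open>?n - 1 > 0\<close> by (intro test_bound_plus_scal_term) auto
  ultimately have "partial_eig_sum L \<alpha> + Theta_bar CARD('n) \<alpha> * \<alpha> * eig_average L \<le> \<kappa> * ?r"
    unfolding \<Theta>_def by linarith
  moreover have "0 < \<kappa>"
    unfolding \<kappa>_def using t \<open>?n - 1 > 0\<close> by (simp add: add_pos_nonneg)
  ultimately show ?thesis
    using that by blast
qed

lemma ricci_form_sign_of_cone_gap:
  assumes "dot v v = 1" and "3 \<le> CARD('n)" and "1 \<le> \<alpha>" and "\<alpha> < real (dimS20 CARD('n))"
  defines "gap \<equiv> partial_eig_sum L \<alpha> + Theta_bar CARD('n) \<alpha> * \<alpha> * eig_average L"
  shows "0 \<le> gap \<Longrightarrow> 0 \<le> ricci_form R v" and "0 < gap \<Longrightarrow> 0 < ricci_form R v"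
proof -
  obtain \<kappa> where "0 < \<kappa>" and "gap \<le> \<kappa> * ricci_form R v"
    unfolding gap_def by (rule cone_gap_le_ricci_form[OF assms(1-4)])
  show "0 \<le> ricci_form R v" if "0 \<le> gap"
  proof -
    have "0 \<le> \<kappa> * ricci_form R v"
      using that \<open>gap \<le> \<kappa> * ricci_form R v\<close> by linarith
    then show ?thesis
      using \<open>0 < \<kappa>\<close> by (simp add: zero_le_mult_iff)
  qed
  show "0 < ricci_form R v" if "0 < gap"
  proof -
    have "0 < \<kappa> * ricci_form R v"
      using that \<open>gap \<le> \<kappa> * ricci_form R v\<close> by linarith
    then show ?thesis
      using \<open>0 < \<kappa>\<close> by (simp add: zero_less_mult_iff)
  qed
qed

end

lemma in_cone_iff:
  "0 < \<alpha> \<Longrightarrow> in_cone R \<alpha> \<theta>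
    \<longleftrightarrow> 0 \<le> partial_eig_sum (curv_op2_eigenvalues R) \<alpha> + \<theta> * \<alpha> * eig_average (curv_op2_eigenvalues R)"
  unfolding in_cone_def by (simp add: field_simps) (intro iffI; linarith)

lemma in_cone_interior_iff:
  "0 < \<alpha> \<Longrightarrow> in_cone_interior R \<alpha> \<theta>
    \<longleftrightarrow> 0 < partial_eig_sum (curv_op2_eigenvalues R) \<alpha> + \<theta> * \<alpha> * eig_average (curv_op2_eigenvalues R)"
  unfolding in_cone_interior_def by (simp add: field_simps) (intro iffI; linarith)

lemma ricci_form_scale: "ricci_form R (\<lambda>i. c * v i) = c\<^sup>2 * ricci_form R v"
  unfolding ricci_form_def by (simp add: sum_distrib_left power2_eq_square mult_ac)

lemma ricci_form_normalize:
  assumes "v i \<noteq> 0"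
  defines "u \<equiv> \<lambda>j. (1 / sqrt (dot v v)) * v j"
  shows "dot u u = 1" and "ricci_form R v = dot v v * ricci_form R u"
  using dot_self_pos[of v i] assms(1)
  unfolding u_def dot_scale ricci_form_scale by (simp_all add: power_divide)

lemma nonneg_ricci_if_unit:
  assumes "\<And>v. dot v v = 1 \<Longrightarrow> 0 \<le> ricci_form R v"
  shows "nonneg_ricci R"
  unfolding nonneg_ricci_def
proof
  fix v :: "'a \<Rightarrow> real"
  show "0 \<le> ricci_form R v"
  proof (cases "\<exists>i. v i \<noteq> 0")
    case True
    then obtain i where "v i \<noteq> 0"
      by blast
    then show ?thesis
      using ricci_form_normalize[of v i] dot_self_pos[of v i] assms by simp
  qed (simp add: ricci_form_def)
qed

lemma pos_ricci_if_unit: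
  assumes "\<And>v. dot v v = 1 \<Longrightarrow> 0 < ricci_form R v"
  shows "pos_ricci R"
  unfolding pos_ricci_def
proof (intro allI impI)
  fix v :: "'a \<Rightarrow> real"
  assume "\<exists>i. v i \<noteq> 0"
  then obtain i where "v i \<noteq> 0"
    by blast
  then show "0 < ricci_form R v"
    using ricci_form_normalize[of v i] dot_self_pos[of v i] assms by simp
qed

theorem proposition1p4:
  fixes R :: "('n::finite) tensor4" and \<alpha> :: real
  assumes "(card (UNIV :: 'n set)) \<ge> 3"
    and "alg_curv_tensor R"
    and "1 \<le> \<alpha>" and "\<alpha> < real (dimS20 (card (UNIV :: 'n set)))"
  shows "(in_cone R \<alpha> (Theta_bar (card (UNIV :: 'n set)) \<alpha>) \<longrightarrow> nonneg_ricci R) \<and>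
         (in_cone_interior R \<alpha> (Theta_bar (card (UNIV :: 'n set)) \<alpha>) \<longrightarrow> pos_ricci R)"
proof -
  obtain e where eigenbasis: "curv_eigenbasis R e (curv_op2_eigenvalues R)"
    using is_eigenvalue_list_curv_op2_eigenvalues[OF assms(2)] assms(2)
    unfolding is_eigenvalue_list_def curv_eigenbasis_def orthonormal_family_def by blast
  interpret curv_eigenbasis R e "curv_op2_eigenvalues R"
    by (rule eigenbasis)
  show ?thesis
    using ricci_form_sign_of_cone_gap[OF _ assms(1,3,4)] assms(3)
    by (auto simp: in_cone_iff in_cone_interior_iff intro!: nonneg_ricci_if_unit pos_ricci_if_unit)
qed

end
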